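(* Let $N\ge3$, $\mu\ge0$, assume (K0) and (F0), and let $p>p_S(\alpha)$. For every $\sigma>0$ there is $\zeta_\sigma>0$ such that $r_0(\zeta)\ge\sigma\zeta^{-1/\theta}$ for all $\zeta>\zeta_\sigma$. Furthermore, for every $\sigma>0$, $$\lim_{\zeta\to\infty}\zeta^{-1}\big|u(\sigma\zeta^{-1/\theta},\zeta)-\bar u(\sigma\zeta^{-1/\theta},\zeta)\big|=0,\qquad \lim_{\zeta\to\infty}\zeta^{-1-1/\theta}\big|u_r(\sigma\zeta^{-1/\theta},\zeta)-\bar u_r(\sigma\zeta^{-1/\theta},\zeta)\big|=0.$$
   Context: (K0): $K:(0,\infty)\to(0,\infty)$ is continuous and $K(r)=(k_0+o(1))r^{\alpha}$ as $r\to0$ for some $\alpha>-2$, $k_0>0$. (F0): $f:(0,\infty)\to[0,\infty)$ is continuous, not identically zero, and $f(r)=O(r^{\nu})$ as $r\to0$ for some $\nu>-2$. $p_S(\alpha)=\frac{N+2+2\alpha}{N-2}$, $\theta:=\frac{2+\alpha}{p-1}$. For $\zeta>0$, $u(\cdot,\zeta)$ denotes the (unique) regular solution of $u''+\frac{N-1}{r}u'+K(r)\max\{u,0\}^p+\mu f(r)=0$ with $u(0)=\zeta$, i.e. the continuous solution on $[0,\infty)$ of $u(r)=\zeta-\int_0^r\frac{s^{2-N}-r^{2-N}}{N-2}s^{N-1}\big(K(s)\max\{u(s),0\}^p+\mu f(s)\big)ds$; $r_0(\zeta)\in(0,\infty]$ is its first zero ($r_0(\zeta)=\infty$ if $u(\cdot,\zeta)>0$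 on $(0,\infty)$). $\bar u(\cdot,\zeta)$ denotes the solution of $\bar u''+\frac{N-1}{r}\bar u'+k_0r^{\alpha}\bar u^p=0$ for $r>0$, $\bar u(0)=\zeta$ (regular at $0$), which is positive on $(0,\infty)$ and satisfies $\bar u(r,\zeta)=\zeta\bar u(\zeta^{1/\theta}r,1)$. *)

theory Defs
  imports "HOL-Analysis.Analysis" "HOL-Library.Landau_Symbols"
begin

text \<open>v is a regular solution (on [0,\<infinity>)) of
  v'' + (N-1)/r v' + g(r, v) = 0, v(0) = zeta, in the integral form
  v(r) = zeta - int_0^r (s^(2-N) - r^(2-N))/(N-2) s^(N-1) g(s, v(s)) ds.\<close>
definition regular_sol ::
  "nat \<Rightarrow> (real \<Rightarrow> real \<Rightarrow> real) \<Rightarrow> real \<Rightarrow> (real \<Rightarrow> real) \<Rightarrow> bool" where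
  "regular_sol N g zeta v \<longleftrightarrow>
     continuous_on {0..} v \<and> v 0 = zeta \<and>
     (\<forall>r>0. ((\<lambda>s. (s powr (2 - real N) - r powr (2 - real N)) / (real N - 2)
                  * s powr (real N - 1) * g s (v s))
             has_integral (zeta - v r)) {0..r})"

end

theory Submission
  imports Defs
begin

text \<open>Write theta = (2 + alpha)/(p - 1) and l = zeta^(-1/theta). The blow-up
  w(rho) = u(l rho, zeta)/zeta solves the same radial integral equation with initial value 1,
  except that K is replaced by K(l rho)/l^alpha, which tends to k0 rho^alpha, and mu f by a term
  of order zeta^(-1 - (2 + nu)/theta) rho^nu. The model equation is invariant under this scaling,
  so ubar r zeta = zeta U(r/l) with U = ubar . 1 by uniqueness. A Gronwall estimate for the
  integral equation on [0, 2 sigma] gives w -> U uniformly on [0, sigma], and the flux formula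
  v'(r) = - r^(1-N) int_0^r s^(N-1) g(s, v s) ds then gives w'(sigma) -> U'(sigma): these are the two
  limits. Finally U > 0 on [0, oo): for p > p_S(alpha) the Pohozaev function of U is strictly
  decreasing and tends to 0 at 0, yet it would be nonnegative at a first zero of U. Hence w stays
  positive on [0, sigma] once zeta is large, which is the first claim.\<close>

lemma integrable_on_Icc0_dominated:
  fixes F G :: "real \<Rightarrow> real"
  assumes cont: "continuous_on {0<..<t} F" and G: "G integrable_on {0..t}"
    and bound: "\<And>s. 0 < s \<Longrightarrow> s < t \<Longrightarrow> \<bar>F s\<bar> \<le> G s"
  shows "F integrable_on {0..t}"
proof -
  have "G integrable_on {0<..<t}"
    using G integrable_on_Icc_iff_Ioo by blast
  then have "F integrable_on {0<..<t}"
    by (intro measurable_bounded_by_integrable_imp_integrable_real[OF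
          continuous_imp_measurable_on_sets_lebesgue[OF cont]]) (auto intro: bound)
  then show ?thesis
    using integrable_on_Icc_iff_Ioo by blast
qed

lemma integrable_on_Icc0_powr_dominated:
  fixes F :: "real \<Rightarrow> real"
  assumes "continuous_on {0<..<t} F" and "t \<ge> 0" and "a > -1" and "b > -1"
    and "\<And>s. 0 < s \<Longrightarrow> s < t \<Longrightarrow> \<bar>F s\<bar> \<le> C * (s powr a + s powr b)"
  shows "F integrable_on {0..t}"
proof (rule integrable_on_Icc0_dominated[OF assms(1)])
  show "(\<lambda>s. C * (s powr a + s powr b)) integrable_on {0..t}"
    using assms(2-4)
    by (intro integrable_on_mult_right integrable_add integrable_on_powr_from_0)
qed (rule assms(5))

lemma integrable_powr_mult_continuous:
  fixes \<phi> :: "real \<Rightarrow> real"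
  assumes cont: "continuous_on {0..t} \<phi>" and t: "t \<ge> 0" and q: "q > -1"
  shows "(\<lambda>s. C * s powr q * \<phi> s) integrable_on {0..t}"
proof -
  obtain M where M: "\<forall>x\<in>\<phi> ` {0..t}. norm x \<le> M"
    using compact_imp_bounded[OF compact_continuous_image[OF cont compact_Icc]]
    unfolding bounded_iff by blast
  show ?thesis
  proof (rule integrable_on_Icc0_dominated[where G = "\<lambda>s. (\<bar>C\<bar> * M) * s powr q"])
    show "continuous_on {0<..<t} (\<lambda>s. C * s powr q * \<phi> s)"
      by (intro continuous_intros continuous_on_subset[OF cont]) auto
    show "(\<lambda>s. (\<bar>C\<bar> * M) * s powr q) integrable_on {0..t}"
      using t q by (intro integrable_on_mult_right integrable_on_powr_from_0) auto
    fix s assume s: "0 < s" "s < t"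
    have "\<bar>C * s powr q * \<phi> s\<bar> = \<bar>C\<bar> * s powr q * \<bar>\<phi> s\<bar>"
      by (simp add: abs_mult)
    also have "\<dots> \<le> \<bar>C\<bar> * s powr q * M"
      using M s by (intro mult_left_mono) auto
    finally show "\<bar>C * s powr q * \<phi> s\<bar> \<le> (\<bar>C\<bar> * M) * s powr q"
      by (simp add: algebra_simps)
  qed
qed

lemma has_real_derivative_integral_Icc0:
  fixes F :: "real \<Rightarrow> real"
  assumes F: "F integrable_on {0..R}" and cont: "continuous_on {0<..<R} F"
    and x: "0 < x" "x < R"
  shows "((\<lambda>y. integral {0..y} F) has_real_derivative F x) (at x)"
proof -
  have "continuous (at x) F"
    using cont x by (simp add: continuous_on_eq_continuous_at)
  then have "((\<lambda>y. integral {0..y} F) has_vector_derivative F x) (at x within {0..R})"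
    using integral_has_vector_derivative_continuous_at[OF F, of x "{}"] x
    by (auto intro: continuous_at_imp_continuous_within)
  then have "((\<lambda>y. integral {0..y} F) has_vector_derivative F x) (at x)"
    using x by (auto simp: at_within_Icc_at)
  then show ?thesis
    by (simp add: has_real_derivative_iff_has_vector_derivative)
qed

text \<open>With A' = c t^g, the function exp(- A t) (E + int_0^t c s^g phi) is non-increasing.\<close>
lemma gronwall_powr:
  fixes \<phi> :: "real \<Rightarrow> real"
  assumes R: "R > 0" and g: "g > -1" and c: "c \<ge> 0"
    and cont: "continuous_on {0..R} \<phi>"
    and ineq: "\<And>t. 0 \<le> t \<Longrightarrow> t \<le> R \<Longrightarrow> \<phi> t \<le> E + integral {0..t} (\<lambda>s. c * s powr g * \<phi> s)"
    and t: "0 \<le> t" "t \<le> R"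
  shows "\<phi> t \<le> E * exp (c * t powr (g + 1) / (g + 1))"
proof -
  define F where "F = (\<lambda>s. c * s powr g * \<phi> s)"
  define I where "I = (\<lambda>t. integral {0..t} F)"
  define A where "A = (\<lambda>t::real. c * t powr (g + 1) / (g + 1))"
  define \<Psi> where "\<Psi> = (\<lambda>t. exp (- A t) * (E + I t))"
  have Fc: "continuous_on {0<..<R} F"
    unfolding F_def by (intro continuous_intros continuous_on_subset[OF cont]) auto
  have FI: "F integrable_on {0..R}"
    unfolding F_def using R g by (intro integrable_powr_mult_continuous[OF cont]) auto
  have Icont: "continuous_on {0..R} I"
    unfolding I_def by (rule indefinite_integral_continuous_1[OF FI])
  have Acont: "continuous_on {0..R} A"
    unfolding A_def using g
    by (intro continuous_intros continuous_on_powr') (auto intro: continuous_intros)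
  have Psicont: "continuous_on {0..t} \<Psi>"
    unfolding \<Psi>_def using t
    by (intro continuous_intros continuous_on_subset[OF Icont] continuous_on_subset[OF Acont]) auto
  have "\<exists>y. (\<Psi> has_real_derivative y) (at x) \<and> y \<le> 0" if x: "0 < x" "x < t" for x
  proof -
    have dI: "(I has_real_derivative F x) (at x)"
      unfolding I_def using x t by (intro has_real_derivative_integral_Icc0[OF FI Fc]) auto
    have "((\<lambda>x. x powr (g + 1)) has_real_derivative (g + 1) * x powr (g + 1 - 1)) (at x)"
      using x by (intro has_real_derivative_powr) auto
    then have "(A has_real_derivative c * ((g + 1) * x powr (g + 1 - 1)) / (g + 1)) (at x)"
      unfolding A_def by (intro DERIV_cdivide DERIV_cmult)
    then have dA: "(A has_real_derivative c * x powr g) (at x)"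
      using g by simp
    have "(\<Psi> has_real_derivative
        exp (- A x) * (- (c * x powr g)) * (E + I x) + exp (- A x) * F x) (at x)"
      using DERIV_mult[OF DERIV_fun_exp[OF DERIV_minus[OF dA]] DERIV_add[OF DERIV_const dI]]
      by (simp add: \<Psi>_def mult.commute)
    moreover have "exp (- A x) * (- (c * x powr g)) * (E + I x) + exp (- A x) * F x
        = exp (- A x) * (c * x powr g) * (\<phi> x - (E + I x))"
      by (simp add: F_def algebra_simps)
    moreover have "\<dots> \<le> 0"
      using ineq[of x] x t c unfolding I_def F_def
      by (intro mult_nonneg_nonpos) auto
    ultimately show ?thesis by auto
  qed
  then have "\<Psi> t \<le> \<Psi> 0"
    using DERIV_nonpos_imp_decreasing_open[OF t(1) _ Psicont] by blast
  then have "E + I t \<le> E * exp (A t)"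
    by (simp add: \<Psi>_def A_def I_def exp_minus field_simps)
  then show ?thesis
    using ineq[OF t] unfolding I_def F_def A_def by simp
qed

lemma powr_diff_le_mean_value:
  fixes a b p M :: real
  assumes p: "p \<ge> 1" and ab: "0 \<le> b" "b \<le> a" "a \<le> M"
  shows "a powr p - b powr p \<le> p * M powr (p - 1) * (a - b)"
proof (cases "b = a")
  case False
  then have lt: "b < a" using ab by simp
  have cont: "continuous_on {b..a} (\<lambda>x. x powr p)"
    using p ab by (intro continuous_on_powr') (auto intro: continuous_intros)
  have "(\<lambda>x. x powr p) differentiable (at x)" if "b < x" for x
    using has_real_derivative_powr[of x p] that ab real_differentiable_def by fastforce
  then obtain l x where x: "b < x" "x < a" "((\<lambda>x. x powr p) has_real_derivative l) (at x)"
    and eq: "a powr p - b powr p = (a - b) * l"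
    using MVT[OF lt cont] by blast
  have "l = p * x powr (p - 1)"
    using DERIV_unique[OF x(3) has_real_derivative_powr[of x p]] x ab by auto
  also have "\<dots> \<le> p * M powr (p - 1)"
    using x ab p by (intro mult_left_mono powr_mono2) auto
  finally show ?thesis
    unfolding eq using lt by (simp add: mult.commute mult_left_mono)
qed simp

lemma max0_powr_lipschitz:
  fixes x y p M :: real
  assumes p: "p \<ge> 1" and M: "M \<ge> 0" and xy: "x \<le> M" "y \<le> M"
  shows "\<bar>max x 0 powr p - max y 0 powr p\<bar> \<le> p * M powr (p - 1) * \<bar>x - y\<bar>"
proof -
  have nonneg: "\<bar>a powr p - b powr p\<bar> \<le> p * M powr (p - 1) * \<bar>a - b\<bar>"
    if "0 \<le> a" "a \<le> M" "0 \<le> b" "b \<le> M" for a b :: real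
  proof (cases "b \<le> a")
    case True
    have "b powr p \<le> a powr p"
      using True that p by (intro powr_mono2) auto
    then show ?thesis
      using powr_diff_le_mean_value[OF p that(3) True that(2)] True by simp
  next
    case False
    have "a powr p \<le> b powr p"
      using False that p by (intro powr_mono2) auto
    then show ?thesis
      using powr_diff_le_mean_value[of p a b M] p that False by simp
  qed
  have "\<bar>max x 0 powr p - max y 0 powr p\<bar> \<le> p * M powr (p - 1) * \<bar>max x 0 - max y 0\<bar>"
    using xy M by (intro nonneg) auto
  also have "\<dots> \<le> p * M powr (p - 1) * \<bar>x - y\<bar>"
    using p by (intro mult_left_mono) auto
  finally show ?thesis .
qed

lemma first_zero_exists:
  fixes v :: "real \<Rightarrow> real"
  assumes cont: "continuous_on {0..} v" and v0: "v 0 > 0" and r: "r \<ge> 0" "v r \<le> 0"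
  obtains R where "R > 0" "v R = 0" "\<And>x. 0 \<le> x \<Longrightarrow> x < R \<Longrightarrow> v x > 0"
proof -
  define Z where "Z = {x \<in> {0..r}. v x = 0}"
  have cont': "continuous_on {0..x} v" for x
    using cont by (rule continuous_on_subset) auto
  have zero_below: "\<exists>y. 0 \<le> y \<and> y \<le> x \<and> v y = 0" if "0 \<le> x" "v x \<le> 0" for x
    using IVT2'[of v x 0 0, OF that(2) _ that(1) cont'] v0 by auto
  have "Z \<noteq> {}"
    using zero_below[OF r] unfolding Z_def by auto
  moreover have "closed Z"
    unfolding Z_def by (intro continuous_closed_preimage_constant cont') auto
  moreover have bdd: "bdd_below Z"
    unfolding Z_def by (auto intro: bdd_belowI[of _ 0])
  ultimately have "Inf Z \<in> Z"
    using closed_contains_Inf by blast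
  then have R: "v (Inf Z) = 0" "Inf Z \<ge> 0" "Inf Z \<le> r"
    unfolding Z_def by auto
  show ?thesis
  proof (rule that[OF _ R(1)])
    show "Inf Z > 0"
      using R v0 by (cases "Inf Z = 0") auto
    show "v x > 0" if x: "0 \<le> x" "x < Inf Z" for x
    proof (rule ccontr)
      assume "\<not> v x > 0"
      then obtain y where "0 \<le> y" "y \<le> x" "v y = 0"
        using zero_below x by force
      then have "Inf Z \<le> y"
        using x R by (intro cInf_lower[OF _ bdd]) (auto simp: Z_def)
      then show False using \<open>y \<le> x\<close> x by simp
    qed
  qed
qed

lemma has_real_derivative_rescale:
  assumes "(h has_real_derivative D) (at (x / l))" and "l \<noteq> 0"
  shows "((\<lambda>r. c * h (r / l)) has_real_derivative c * D / l) (at x)"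
proof -
  have "((\<lambda>r. r / l) has_real_derivative 1 / l) (at x)"
    using DERIV_cdivide[OF DERIV_ident, of l] by simp
  from DERIV_cmult[OF DERIV_chain2[OF assms(1) this], of c] show ?thesis
    by simp
qed

lemma tendsto_0_if_eventually_abs_le:
  fixes f :: "'a \<Rightarrow> real"
  assumes "\<And>\<eta>. \<eta> > 0 \<Longrightarrow> \<forall>\<^sub>F x in F. \<bar>f x\<bar> \<le> \<eta>"
  shows "(f \<longlongrightarrow> 0) F"
  unfolding tendsto_iff dist_real_def
proof (intro allI impI)
  fix e :: real assume "e > 0"
  then show "\<forall>\<^sub>F x in F. \<bar>f x - 0\<bar> < e"
    using assms[of "e / 2"] by (auto elim: eventually_mono)
qed

section \<open>The radial integral equation\<close>

definition radial_green :: "real \<Rightarrow> real \<Rightarrow> real \<Rightarrow> real" where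
  "radial_green n r s = (s powr (2 - n) - r powr (2 - n)) / (n - 2) * s powr (n - 1)"

text \<open>For a regular solution v of v'' + (N - 1)/r v' + g(r, v) = 0, v' = - radial_flux N (g(., v)).\<close>
definition radial_flux :: "real \<Rightarrow> (real \<Rightarrow> real) \<Rightarrow> real \<Rightarrow> real" where
  "radial_flux n h r = r powr (1 - n) * integral {0..r} (\<lambda>s. s powr (n - 1) * h s)"

lemma regular_sol_iff:
  "regular_sol N g z v \<longleftrightarrow> continuous_on {0..} v \<and> v 0 = z \<and>
     (\<forall>r>0. ((\<lambda>s. radial_green (real N) r s * g s (v s)) has_integral (z - v r)) {0..r})"
  by (simp add: regular_sol_def radial_green_def)

lemma radial_green_at_0 [simp]: "radial_green n r 0 = 0"
  by (simp add: radial_green_def)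

lemma radial_green_eq:
  assumes "s > 0"
  shows "radial_green n r s = (s - r powr (2 - n) * s powr (n - 1)) / (n - 2)"
proof -
  have "s powr (2 - n) * s powr (n - 1) = s"
    using assms by (simp add: powr_add[symmetric])
  then show ?thesis
    by (simp add: radial_green_def left_diff_distrib)
qed

lemma radial_green_bounds:
  assumes n: "n > 2" and s: "0 < s" "s \<le> r"
  shows "0 \<le> radial_green n r s" and "radial_green n r s \<le> s / (n - 2)"
proof -
  have "r powr (2 - n) \<le> s powr (2 - n)"
    using s n by (intro powr_mono2') auto
  then show "0 \<le> radial_green n r s"
    using n by (simp add: radial_green_def)
  show "radial_green n r s \<le> s / (n - 2)"
    using n s by (simp add: radial_green_eq divide_right_mono)
qed

lemma radial_green_scale:
  assumes l: "l > 0" and r: "r > 0" and s: "s \<ge> 0"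
  shows "radial_green n (l * r) (l * s) = l * radial_green n r s"
proof -
  have alg: "(L2 * S2 - L2 * R2) / d * (L1 * S1) = (L2 * L1) * ((S2 - R2) / d * S1)"
    for L2 S2 R2 d L1 S1 :: real
    by (simp add: right_diff_distrib[symmetric])
  have sc: "(l * x) powr q = l powr q * x powr q" if "x \<ge> 0" for x q
    using l that by (simp add: powr_mult)
  have "l powr (2 - n) * l powr (n - 1) = l"
    using l by (simp add: powr_add[symmetric])
  then show ?thesis
    unfolding radial_green_def sc[OF s] sc[OF less_imp_le[OF r]] alg by simp
qed

lemma regular_sol_le_initial:
  assumes N: "N \<ge> 3" and sol: "regular_sol N g z v"
    and g: "\<And>s. 0 < s \<Longrightarrow> g s (v s) \<ge> 0" and r: "r \<ge> 0"
  shows "v r \<le> z"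
proof (cases "r = 0")
  case True
  then show ?thesis using sol by (simp add: regular_sol_iff)
next
  case False
  then have "((\<lambda>s. radial_green (real N) r s * g s (v s)) has_integral (z - v r)) {0..r}"
    using sol r by (simp add: regular_sol_iff)
  moreover have "0 \<le> radial_green (real N) r s * g s (v s)" if "s \<in> {0..r}" for s
    using that N g[of s] radial_green_bounds(1)[of "real N" s r]
    by (cases "s = 0") auto
  ultimately have "0 \<le> z - v r"
    by (rule has_integral_nonneg)
  then show ?thesis by simp
qed

lemma regular_sol_rescale:
  assumes sol: "regular_sol N g z v" and a: "a > 0" and l: "l > 0"
    and g': "\<And>s x. s > 0 \<Longrightarrow> g' s x = a * l\<^sup>2 * g (l * s) (x / a)"
  shows "regular_sol N g' (a * z) (\<lambda>r. a * v (l * r))"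
  unfolding regular_sol_iff
proof (intro conjI allI impI)
  have "continuous_on {0..} v"
    using sol by (simp add: regular_sol_iff)
  moreover have "(\<lambda>r. l * r) ` {0..} \<subseteq> {0..}"
    using l by (auto simp: image_subset_iff)
  ultimately have "continuous_on {0..} (\<lambda>r. v (l * r))"
    using continuous_on_compose2[of "{0..}" v "{0..}" "\<lambda>r. l * r"]
    by (simp add: continuous_on_mult_left)
  then show "continuous_on {0..} (\<lambda>r. a * v (l * r))"
    by (rule continuous_on_mult_left)
  show "a * v (l * 0) = a * z"
    using sol by (simp add: regular_sol_iff)
  fix r :: real assume r: "r > 0"
  define F where "F = (\<lambda>s. radial_green (real N) (l * r) s * g s (v s))"
  have "(F has_integral (z - v (l * r))) {0..l * r}"
    using sol r l unfolding regular_sol_iff F_def by auto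
  then have "((\<lambda>s. F (l * s)) has_integral (1 / l) * (z - v (l * r))) ((\<lambda>s. s / l) ` {0..l * r})"
    using has_integral_stretch_real[of F _ 0 "l * r" l] l by simp
  moreover have "(\<lambda>s. s / l) ` {0..l * r} = {0..r}"
    using l by (auto simp: image_iff intro!: bexI[where x = "l * _"])
  ultimately have "((\<lambda>s. (a * l) * F (l * s)) has_integral (a * l) * ((1 / l) * (z - v (l * r)))) {0..r}"
    by (intro has_integral_mult_right) simp
  moreover have "(a * l) * F (l * s) = radial_green (real N) r s * g' s (a * v (l * s))"
    if "s \<in> {0..r}" for s
  proof (cases "s = 0")
    case False
    then show ?thesis
      using that a l r g'[of s] by (simp add: F_def radial_green_scale power2_eq_square)
  qed (simp add: F_def)
  ultimately have "((\<lambda>s. radial_green (real N) r s * g' s (a * v (l * s))) has_integral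
      (a * l) * ((1 / l) * (z - v (l * r)))) {0..r}"
    by (rule has_integral_eq[rotated])
  then show "((\<lambda>s. radial_green (real N) r s * g' s (a * v (l * s))) has_integral
      (a * z - a * v (l * r))) {0..r}"
    using l by (simp add: right_diff_distrib)
qed

lemma powr_weighted_integrable:
  fixes h :: "real \<Rightarrow> real"
  assumes cont: "continuous_on {0<..<t} h" and t: "t \<ge> 0" and q: "q \<ge> 1"
    and ab: "a > -2" "b > -2"
    and bound: "\<And>s. 0 < s \<Longrightarrow> s < t \<Longrightarrow> \<bar>h s\<bar> \<le> C * (s powr a + s powr b)"
  shows "(\<lambda>s. s powr q * h s) integrable_on {0..t}"
proof (rule integrable_on_Icc0_powr_dominated[where a = "q + a" and b = "q + b" and C = C])
  show "continuous_on {0<..<t} (\<lambda>s. s powr q * h s)"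
    by (intro continuous_intros cont) auto
  fix s assume s: "0 < s" "s < t"
  have "\<bar>s powr q * h s\<bar> = s powr q * \<bar>h s\<bar>"
    by (simp add: abs_mult)
  also have "\<dots> \<le> s powr q * (C * (s powr a + s powr b))"
    using bound[OF s] by (intro mult_left_mono) auto
  also have "\<dots> = C * (s powr (q + a) + s powr (q + b))"
    using s by (simp add: powr_add algebra_simps)
  finally show "\<bar>s powr q * h s\<bar> \<le> C * (s powr (q + a) + s powr (q + b))" .
qed (use t q ab in auto)

lemma regular_sol_eq_moments:
  fixes N :: nat and g :: "real \<Rightarrow> real \<Rightarrow> real" and v :: "real \<Rightarrow> real"
  defines "h \<equiv> \<lambda>s. g s (v s)" and "n \<equiv> real N"
  assumes N: "N \<ge> 3" and sol: "regular_sol N g z v" and r: "r > 0"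
    and I1: "(\<lambda>s. s * h s) integrable_on {0..r}"
    and I2: "(\<lambda>s. s powr (n - 1) * h s) integrable_on {0..r}"
  shows "v r = z - (integral {0..r} (\<lambda>s. s * h s)
            - r powr (2 - n) * integral {0..r} (\<lambda>s. s powr (n - 1) * h s)) / (n - 2)"
proof -
  have sol_r: "((\<lambda>s. radial_green n r s * h s) has_integral (z - v r)) {0..r}"
    using sol r unfolding regular_sol_iff h_def n_def by auto
  have "((\<lambda>s. (s * h s - r powr (2 - n) * (s powr (n - 1) * h s)) / (n - 2))
      has_integral (integral {0..r} (\<lambda>s. s * h s)
        - r powr (2 - n) * integral {0..r} (\<lambda>s. s powr (n - 1) * h s)) / (n - 2)) {0..r}"
    using I1 I2
    by (intro has_integral_divide has_integral_diff has_integral_mult_right integrable_integral)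
  moreover have "(s * h s - r powr (2 - n) * (s powr (n - 1) * h s)) / (n - 2) = radial_green n r s * h s"
    if "s \<in> {0..r}" for s
  proof (cases "s = 0")
    case False
    then show ?thesis
      using that by (simp add: radial_green_eq algebra_simps)
  qed simp
  ultimately have "((\<lambda>s. radial_green n r s * h s) has_integral (integral {0..r} (\<lambda>s. s * h s)
        - r powr (2 - n) * integral {0..r} (\<lambda>s. s powr (n - 1) * h s)) / (n - 2)) {0..r}"
    by (rule has_integral_eq[rotated])
  from has_integral_unique[OF sol_r this] show ?thesis
    by linarith
qed

lemma radial_flux_has_derivative:
  fixes h :: "real \<Rightarrow> real"
  assumes I: "(\<lambda>s. s powr (n - 1) * h s) integrable_on {0..R}"
    and cont: "continuous_on {0<..<R} h" and x: "0 < x" "x < R"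
  shows "(radial_flux n h has_real_derivative h x - (n - 1) / x * radial_flux n h x) (at x)"
proof -
  define B where "B = (\<lambda>x. integral {0..x} (\<lambda>s. s powr (n - 1) * h s))"
  have flux: "radial_flux n h = (\<lambda>x. x powr (1 - n) * B x)"
    by (simp add: fun_eq_iff radial_flux_def B_def)
  have dB: "(B has_real_derivative x powr (n - 1) * h x) (at x)"
    unfolding B_def using x
    by (intro has_real_derivative_integral_Icc0[OF I]) (auto intro!: continuous_intros cont)
  have "((\<lambda>x. x powr (1 - n) * B x) has_real_derivative
      x powr (1 - n) * (x powr (n - 1) * h x) + (1 - n) * x powr (1 - n - 1) * B x) (at x)"
    using x by (intro DERIV_mult' dB has_real_derivative_powr) auto
  moreover have "x powr (1 - n) * x powr (n - 1) = 1"
    using x by (simp add: powr_add[symmetric])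
  moreover have "x powr (1 - n - 1) = x powr (1 - n) / x"
  proof -
    have "x powr (1 - n - 1) * x powr 1 = x powr (1 - n)"
      by (simp only: powr_add[symmetric]) simp
    then show ?thesis using x by (simp add: field_simps)
  qed
  moreover have "a * (c * H) + (1 - n) * (a / x) * b = H - (n - 1) / x * (a * b)"
    if "a * c = 1" for a c H b
  proof -
    have "a * (c * H) = H"
      using that by (metis mult.assoc mult_1)
    then show ?thesis
      using x by (simp add: field_simps)
  qed
  ultimately show ?thesis
    unfolding flux by simp
qed

lemma regular_sol_has_derivative:
  fixes N :: nat and g :: "real \<Rightarrow> real \<Rightarrow> real" and v :: "real \<Rightarrow> real"
  defines "h \<equiv> \<lambda>s. g s (v s)" and "n \<equiv> real N"
  assumes N: "N \<ge> 3" and sol: "regular_sol N g z v"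
    and cont: "continuous_on {0<..<R} h" and ab: "a > -2" "b > -2"
    and bound: "\<And>s. 0 < s \<Longrightarrow> s < R \<Longrightarrow> \<bar>h s\<bar> \<le> C * (s powr a + s powr b)"
    and r: "0 < r" "r < R"
  shows "(v has_real_derivative - radial_flux n h r) (at r)"
proof -
  have n: "n \<ge> 3" using N by (simp add: n_def)
  have I: "(\<lambda>s. s powr q * h s) integrable_on {0..x}" if "0 \<le> x" "x \<le> R" "q \<ge> 1" for x q
    using that ab
    by (intro powr_weighted_integrable[where C = C and a = a and b = b,
          OF continuous_on_subset[OF cont]]) (auto intro: bound)
  have I1: "(\<lambda>s. s * h s) integrable_on {0..x}" if "0 \<le> x" "x \<le> R" for x
    using I[OF that, of 1] by (rule integrable_eq) auto
  define A where "A = (\<lambda>x. integral {0..x} (\<lambda>s. s * h s))"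
  define B where "B = (\<lambda>x. integral {0..x} (\<lambda>s. s powr (n - 1) * h s))"
  have rep: "v x = z - (A x - x powr (2 - n) * B x) / (n - 2)" if "0 < x" "x < R" for x
    unfolding A_def B_def h_def n_def
    by (rule regular_sol_eq_moments[OF N sol that(1)])
       (use that n I1[of x] I[of x "n - 1"] in \<open>auto simp: h_def n_def\<close>)
  have dA: "(A has_real_derivative r * h r) (at r)"
    unfolding A_def using r I1[of R]
    by (intro has_real_derivative_integral_Icc0[where R = R]) (auto intro!: continuous_intros cont)
  have dB: "(B has_real_derivative r powr (n - 1) * h r) (at r)"
    unfolding B_def using r I[of R "n - 1"] n
    by (intro has_real_derivative_integral_Icc0[where R = R]) (auto intro!: continuous_intros cont)
  have dP: "((\<lambda>x. x powr (2 - n)) has_real_derivative (2 - n) * r powr (2 - n - 1)) (at r)"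
    using r by (intro has_real_derivative_powr)
  have "((\<lambda>x. z - (A x - x powr (2 - n) * B x) / (n - 2)) has_real_derivative
      0 - (r * h r - (r powr (2 - n) * (r powr (n - 1) * h r) + (2 - n) * r powr (2 - n - 1) * B r)) / (n - 2))
      (at r)"
    by (intro DERIV_diff DERIV_const DERIV_cdivide dA DERIV_mult'[OF dP dB])
  moreover have "0 - (r * h r - (r powr (2 - n) * (r powr (n - 1) * h r) + (2 - n) * r powr (2 - n - 1) * B r)) / (n - 2)
      = - (r powr (1 - n) * B r)"
  proof -
    have "r powr (2 - n) * r powr (n - 1) = r"
      using r by (simp add: powr_add[symmetric])
    moreover have "2 - n - 1 = 1 - n" by simp
    ultimately show ?thesis using n by (simp add: field_simps)
  qed
  ultimately have "((\<lambda>x. z - (A x - x powr (2 - n) * B x) / (n - 2)) has_real_derivative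
      - (r powr (1 - n) * B r)) (at r)"
    by simp
  then show ?thesis
    unfolding radial_flux_def B_def
    by (rule has_field_derivative_transform_within_open[where S = "{0<..<R}"])
       (use r rep in \<open>auto simp: B_def\<close>)
qed

lemma radial_flux_bound:
  fixes h :: "real \<Rightarrow> real"
  assumes x: "x > 0" and ab: "n + a > 0" "n + b > 0" and C: "C \<ge> 0"
    and I: "(\<lambda>s. s powr (n - 1) * h s) integrable_on {0..x}"
    and bound: "\<And>s. 0 < s \<Longrightarrow> s \<le> x \<Longrightarrow> \<bar>h s\<bar> \<le> C * (s powr a + s powr b)"
  shows "\<bar>radial_flux n h x\<bar> \<le> C * (x powr (a + 1) / (n + a) + x powr (b + 1) / (n + b))"
proof -
  define M where "M = (\<lambda>s. C * (s powr (n - 1 + a) + s powr (n - 1 + b)))"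
  have moments: "(M has_integral C * (x powr (n + a) / (n + a) + x powr (n + b) / (n + b))) {0..x}"
    unfolding M_def
    using has_integral_powr_from_0[of "n - 1 + a" x] has_integral_powr_from_0[of "n - 1 + b" x] x ab
    by (intro has_integral_mult_right has_integral_add) auto
  have "\<bar>s powr (n - 1) * h s\<bar> \<le> M s" if "s \<in> {0..x}" for s
  proof (cases "s = 0")
    case False
    then have "\<bar>s powr (n - 1) * h s\<bar> \<le> s powr (n - 1) * (C * (s powr a + s powr b))"
      using that bound[of s] by (simp add: abs_mult mult_left_mono)
    also have "\<dots> = M s"
      unfolding M_def by (simp only: powr_add) (simp add: algebra_simps)
    finally show ?thesis .
  qed (use C in \<open>simp add: M_def\<close>)
  then have "norm (integral {0..x} (\<lambda>s. s powr (n - 1) * h s)) \<le> integral {0..x} M"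
    using moments by (intro integral_norm_bound_integral[OF I]) auto
  then have "\<bar>integral {0..x} (\<lambda>s. s powr (n - 1) * h s)\<bar>
      \<le> C * (x powr (n + a) / (n + a) + x powr (n + b) / (n + b))"
    using integral_unique[OF moments] by simp
  then have "\<bar>radial_flux n h x\<bar>
      \<le> x powr (1 - n) * (C * (x powr (n + a) / (n + a) + x powr (n + b) / (n + b)))"
    unfolding radial_flux_def by (simp add: abs_mult mult_left_mono)
  also have "\<dots> = C * (x powr (a + 1) / (n + a) + x powr (b + 1) / (n + b))"
  proof -
    have "x powr (1 - n) * x powr (n + q) = x powr (q + 1)" for q
      by (simp add: powr_add[symmetric] add.commute)
    then show ?thesis
      by (simp add: algebra_simps add_divide_distrib)
  qed
  finally show ?thesis .
qed

section \<open>Comparison of regular solutions\<close>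

lemma regular_sol_diff_integral_bound:
  fixes N :: nat and g1 g2 :: "real \<Rightarrow> real \<Rightarrow> real" and v1 v2 :: "real \<Rightarrow> real"
  assumes N: "N \<ge> 3" and sol1: "regular_sol N g1 z v1" and sol2: "regular_sol N g2 z v2"
    and t: "t > 0" and ab: "a > -2" "b > -2"
    and bound: "\<And>s. 0 < s \<Longrightarrow> s \<le> t \<Longrightarrow> \<bar>g1 s (v1 s) - g2 s (v2 s)\<bar>
                  \<le> c * s powr a * \<bar>v1 s - v2 s\<bar> + e * (s powr a + s powr b)"
  shows "\<bar>v1 t - v2 t\<bar> \<le> integral {0..t} (\<lambda>s. c / (real N - 2) * s powr (a + 1) * \<bar>v1 s - v2 s\<bar>)
           + e / (real N - 2) * (t powr (a + 2) / (a + 2) + t powr (b + 2) / (b + 2))"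
proof -
  define n where "n = real N"
  have n: "n \<ge> 3" using N by (simp add: n_def)
  define G where "G = radial_green n t"
  define F1 where "F1 = (\<lambda>s. c / (n - 2) * s powr (a + 1) * \<bar>v1 s - v2 s\<bar>)"
  define F2 where "F2 = (\<lambda>s. e / (n - 2) * (s powr (a + 1) + s powr (b + 1)))"
  have "((\<lambda>s. G s * g1 s (v1 s) - G s * g2 s (v2 s)) has_integral ((z - v1 t) - (z - v2 t))) {0..t}"
    using sol1 sol2 t unfolding regular_sol_iff G_def n_def by (intro has_integral_diff) auto
  then have diff: "((\<lambda>s. G s * (g1 s (v1 s) - g2 s (v2 s))) has_integral (v2 t - v1 t)) {0..t}"
    by (simp add: right_diff_distrib)
  have "continuous_on {0..} v1" "continuous_on {0..} v2"
    using sol1 sol2 by (simp_all add: regular_sol_iff)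
  then have "continuous_on {0..t} (\<lambda>s. \<bar>v1 s - v2 s\<bar>)"
    by (intro continuous_intros) (auto elim!: continuous_on_subset)
  then have F1: "F1 integrable_on {0..t}"
    unfolding F1_def using t ab by (intro integrable_powr_mult_continuous) auto
  have ab2: "a + 1 + 1 = a + 2" "b + 1 + 1 = b + 2" by simp_all
  have F2: "(F2 has_integral e / (n - 2) * (t powr (a + 2) / (a + 2) + t powr (b + 2) / (b + 2))) {0..t}"
    unfolding F2_def ab2[symmetric] using ab t
    by (intro has_integral_mult_right has_integral_add has_integral_powr_from_0) auto
  have "\<bar>v1 t - v2 t\<bar> = norm (integral {0..t} (\<lambda>s. G s * (g1 s (v1 s) - g2 s (v2 s))))"
    using diff by (simp add: integral_unique abs_minus_commute)
  also have "\<dots> \<le> integral {0..t} (\<lambda>s. F1 s + F2 s)"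
  proof (rule integral_norm_bound_integral)
    show "(\<lambda>s. G s * (g1 s (v1 s) - g2 s (v2 s))) integrable_on {0..t}"
      using diff by blast
    show "(\<lambda>s. F1 s + F2 s) integrable_on {0..t}"
      using F1 F2 by (intro integrable_add) blast+
    fix s assume s: "s \<in> {0..t}"
    show "norm (G s * (g1 s (v1 s) - g2 s (v2 s))) \<le> F1 s + F2 s"
    proof (cases "s = 0")
      case False
      then have s0: "s > 0" using s by simp
      have G: "0 \<le> G s" "G s \<le> s / (n - 2)"
        using radial_green_bounds[of n s t] n s0 s unfolding G_def by auto
      have "norm (G s * (g1 s (v1 s) - g2 s (v2 s))) = G s * \<bar>g1 s (v1 s) - g2 s (v2 s)\<bar>"
        using G by (simp add: abs_mult)
      also have "\<dots> \<le> s / (n - 2) * (c * s powr a * \<bar>v1 s - v2 s\<bar> + e * (s powr a + s powr b))"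
        using G bound[of s] s0 s by (intro mult_mono) auto
      also have "\<dots> = F1 s + F2 s"
        using s0 by (simp add: F1_def F2_def powr_add add_divide_distrib algebra_simps)
      finally show ?thesis .
    qed (use ab in \<open>simp add: G_def F1_def F2_def\<close>)
  qed
  also have "\<dots> = integral {0..t} F1 + e / (n - 2) * (t powr (a + 2) / (a + 2) + t powr (b + 2) / (b + 2))"
    using F2 by (simp add: integral_add[OF F1] integral_unique[OF F2] has_integral_integrable)
  finally show ?thesis
    by (simp add: F1_def n_def)
qed

lemma regular_sol_compare:
  fixes N :: nat and g1 g2 :: "real \<Rightarrow> real \<Rightarrow> real" and v1 v2 :: "real \<Rightarrow> real"
  assumes N: "N \<ge> 3" and sol1: "regular_sol N g1 z v1" and sol2: "regular_sol N g2 z v2"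
    and R: "R > 0" and ab: "a > -2" "b > -2" and c: "c \<ge> 0" and e: "e \<ge> 0"
    and bound: "\<And>s. 0 < s \<Longrightarrow> s \<le> R \<Longrightarrow> \<bar>g1 s (v1 s) - g2 s (v2 s)\<bar>
                  \<le> c * s powr a * \<bar>v1 s - v2 s\<bar> + e * (s powr a + s powr b)"
    and t: "0 \<le> t" "t \<le> R"
  shows "\<bar>v1 t - v2 t\<bar> \<le> e * (R powr (a + 2) / (a + 2) + R powr (b + 2) / (b + 2)) / (real N - 2)
                          * exp (c / (real N - 2) * R powr (a + 2) / (a + 2))"
proof -
  define n where "n = real N"
  have n: "n \<ge> 3" using N by (simp add: n_def)
  define \<phi> where "\<phi> = (\<lambda>s. \<bar>v1 s - v2 s\<bar>)"
  define E where "E = e * (R powr (a + 2) / (a + 2) + R powr (b + 2) / (b + 2)) / (n - 2)"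
  have E: "E \<ge> 0"
    unfolding E_def using e n ab by simp
  have mono: "x powr (a + 2) \<le> R powr (a + 2)" "x powr (b + 2) \<le> R powr (b + 2)"
    if "0 \<le> x" "x \<le> R" for x
    using that ab by (auto intro!: powr_mono2)
  have "continuous_on {0..} v1" "continuous_on {0..} v2"
    using sol1 sol2 by (simp_all add: regular_sol_iff)
  then have phi_cont: "continuous_on {0..R} \<phi>"
    unfolding \<phi>_def by (intro continuous_intros) (auto elim!: continuous_on_subset)
  have ineq: "\<phi> t' \<le> E + integral {0..t'} (\<lambda>s. c / (n - 2) * s powr (a + 1) * \<phi> s)"
    if t': "0 \<le> t'" "t' \<le> R" for t'
  proof (cases "t' = 0")
    case False
    then have "\<phi> t' \<le> integral {0..t'} (\<lambda>s. c / (n - 2) * s powr (a + 1) * \<phi> s)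
        + e / (n - 2) * (t' powr (a + 2) / (a + 2) + t' powr (b + 2) / (b + 2))"
      unfolding \<phi>_def n_def using t' bound
      by (intro regular_sol_diff_integral_bound[OF N sol1 sol2 _ ab]) auto
    moreover have "e / (n - 2) * (t' powr (a + 2) / (a + 2) + t' powr (b + 2) / (b + 2)) \<le> E"
      unfolding E_def using mono[OF t'] e n ab
      by (auto intro!: add_mono mult_left_mono divide_right_mono simp: divide_simps mult.assoc)
    ultimately show ?thesis by simp
  qed (use sol1 sol2 E in \<open>simp add: \<phi>_def regular_sol_iff\<close>)
  have "\<phi> t \<le> E * exp (c / (n - 2) * t powr (a + 1 + 1) / (a + 1 + 1))"
    by (rule gronwall_powr[OF R _ _ phi_cont ineq t]) (use ab c n in auto)
  also have "\<dots> \<le> E * exp (c / (n - 2) * R powr (a + 2) / (a + 2))"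
    using mono[OF t] c n ab E by (simp add: add.commute divide_right_mono mult_left_mono)
  finally show ?thesis
    by (simp add: \<phi>_def E_def n_def)
qed

lemma radial_flux_diff:
  assumes "(\<lambda>s. s powr (n - 1) * h1 s) integrable_on {0..x}"
    and "(\<lambda>s. s powr (n - 1) * h2 s) integrable_on {0..x}"
  shows "radial_flux n (\<lambda>s. h1 s - h2 s) x = radial_flux n h1 x - radial_flux n h2 x"
  using integral_diff[OF assms]
  by (simp add: radial_flux_def right_diff_distrib)

lemma regular_sol_deriv_diff_bound:
  fixes N :: nat and a b :: real and g1 g2 :: "real \<Rightarrow> real \<Rightarrow> real" and v1 v2 :: "real \<Rightarrow> real"
  defines "h1 \<equiv> \<lambda>s. g1 s (v1 s)" and "h2 \<equiv> \<lambda>s. g2 s (v2 s)"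
  assumes N: "N \<ge> 3" and sol1: "regular_sol N g1 z1 v1" and sol2: "regular_sol N g2 z2 v2"
    and r: "0 < r" "r < R" and ab: "a > -2" "b > -2"
    and cont1: "continuous_on {0<..<R} h1" and cont2: "continuous_on {0<..<R} h2"
    and bound1: "\<And>s. 0 < s \<Longrightarrow> s < R \<Longrightarrow> \<bar>h1 s\<bar> \<le> C * (s powr a + s powr b)"
    and bound2: "\<And>s. 0 < s \<Longrightarrow> s < R \<Longrightarrow> \<bar>h2 s\<bar> \<le> C * (s powr a + s powr b)"
    and D: "D \<ge> 0"
    and diff: "\<And>s. 0 < s \<Longrightarrow> s \<le> r \<Longrightarrow> \<bar>h1 s - h2 s\<bar> \<le> D * (s powr a + s powr b)"
  shows "(v1 has_real_derivative deriv v1 r) (at r)" and "(v2 has_real_derivative deriv v2 r) (at r)"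
    and "\<bar>deriv v1 r - deriv v2 r\<bar> \<le> D * (r powr (a + 1) / (real N + a) + r powr (b + 1) / (real N + b))"
proof -
  have d1: "(v1 has_real_derivative - radial_flux N h1 r) (at r)"
    using regular_sol_has_derivative[OF N sol1 cont1[unfolded h1_def] ab bound1[unfolded h1_def] r]
    by (simp add: h1_def)
  have d2: "(v2 has_real_derivative - radial_flux N h2 r) (at r)"
    using regular_sol_has_derivative[OF N sol2 cont2[unfolded h2_def] ab bound2[unfolded h2_def] r]
    by (simp add: h2_def)
  show "(v1 has_real_derivative deriv v1 r) (at r)" "(v2 has_real_derivative deriv v2 r) (at r)"
    using d1 d2 by (simp_all add: DERIV_imp_deriv)
  have I: "(\<lambda>s. s powr (real N - 1) * h s) integrable_on {0..r}"
    if "continuous_on {0<..<R} h" "\<And>s. 0 < s \<Longrightarrow> s < R \<Longrightarrow> \<bar>h s\<bar> \<le> C * (s powr a + s powr b)"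
    for h :: "real \<Rightarrow> real"
    using that r N ab
    by (intro powr_weighted_integrable[where C = C and a = a and b = b,
          OF continuous_on_subset[OF that(1)]]) auto
  have "\<bar>deriv v1 r - deriv v2 r\<bar> = \<bar>radial_flux N (\<lambda>s. h1 s - h2 s) r\<bar>"
    using DERIV_imp_deriv[OF d1] DERIV_imp_deriv[OF d2]
      radial_flux_diff[OF I[OF cont1 bound1] I[OF cont2 bound2]]
    by simp
  also have "\<dots> \<le> D * (r powr (a + 1) / (real N + a) + r powr (b + 1) / (real N + b))"
    using r N ab D diff I[OF cont1 bound1] I[OF cont2 bound2]
    by (intro radial_flux_bound) (auto simp: right_diff_distrib intro: integrable_diff)
  finally show "\<bar>deriv v1 r - deriv v2 r\<bar> \<le> D * (r powr (a + 1) / (real N + a) + r powr (b + 1) / (real N + b))" .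
qed

lemma perturbed_nonlinearity_bounds:
  fixes s x y :: real
  assumes s: "s > 0" and p: "p \<ge> 1" and k0: "k0 \<ge> 0" and e: "e \<le> 1" and Ks: "Ks \<ge> 0"
    and Ks_close: "\<bar>Ks - k0 * s powr alpha\<bar> \<le> e * s powr alpha"
    and fs: "0 \<le> fs" "fs \<le> e * s powr nu" and xy: "x \<le> 1" "y \<le> 1"
  shows "\<bar>Ks * max x 0 powr p + fs - k0 * s powr alpha * max y 0 powr p\<bar>
      \<le> (k0 + 1) * p * s powr alpha * \<bar>x - y\<bar> + e * (s powr alpha + s powr nu)"
    and "\<bar>Ks * max x 0 powr p + fs\<bar> \<le> (k0 + 1) * (s powr alpha + s powr nu)"
    and "\<bar>k0 * s powr alpha * max y 0 powr p\<bar> \<le> (k0 + 1) * (s powr alpha + s powr nu)"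
proof -
  have Ks_le: "Ks \<le> (k0 + 1) * s powr alpha"
    using Ks_close e mult_right_mono[OF e, of "s powr alpha"] by (simp add: algebra_simps abs_le_iff)
  have fs_le: "fs \<le> (k0 + 1) * s powr nu"
    using fs(2) mult_right_mono[of e "k0 + 1" "s powr nu"] e k0 by simp
  have m_le: "max t 0 powr p \<le> 1" if "t \<le> 1" for t
    using powr_mono2[of p "max t 0" 1] that p by simp
  have lip: "\<bar>max x 0 powr p - max y 0 powr p\<bar> \<le> p * \<bar>x - y\<bar>"
    using max0_powr_lipschitz[OF p _ xy] by simp
  have "\<bar>Ks * max x 0 powr p + fs - k0 * s powr alpha * max y 0 powr p\<bar>
      \<le> Ks * \<bar>max x 0 powr p - max y 0 powr p\<bar> + \<bar>Ks - k0 * s powr alpha\<bar> * max y 0 powr p + fs"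
  proof -
    have eq: "Ks * max x 0 powr p + fs - k0 * s powr alpha * max y 0 powr p
        = Ks * (max x 0 powr p - max y 0 powr p) + (Ks - k0 * s powr alpha) * max y 0 powr p + fs"
      by (simp add: algebra_simps)
    have tri: "\<bar>A * B + C * D + F\<bar> \<le> A * \<bar>B\<bar> + \<bar>C\<bar> * D + F"
      if "A \<ge> 0" "D \<ge> 0" "F \<ge> 0" for A B C D F :: real
      using order_trans[OF abs_triangle_ineq add_right_mono[OF abs_triangle_ineq[of "A * B" "C * D"]], of F]
        that by (simp add: abs_mult)
    show ?thesis
      unfolding eq by (rule tri) (use Ks fs in auto)
  qed
  also have "\<dots> \<le> (k0 + 1) * s powr alpha * (p * \<bar>x - y\<bar>) + e * s powr alpha * 1 + e * s powr nu"
    using Ks Ks_le lip m_le[OF xy(2)] Ks_close fs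
    by (intro add_mono mult_mono) auto
  finally show "\<bar>Ks * max x 0 powr p + fs - k0 * s powr alpha * max y 0 powr p\<bar>
      \<le> (k0 + 1) * p * s powr alpha * \<bar>x - y\<bar> + e * (s powr alpha + s powr nu)"
    by (simp add: algebra_simps)
  have "Ks * max x 0 powr p \<le> (k0 + 1) * s powr alpha * 1"
    using Ks_le Ks m_le[OF xy(1)] by (intro mult_mono) auto
  then show "\<bar>Ks * max x 0 powr p + fs\<bar> \<le> (k0 + 1) * (s powr alpha + s powr nu)"
    using Ks fs fs_le by (simp add: distrib_left)
  have "k0 * s powr alpha * max y 0 powr p \<le> (k0 + 1) * s powr alpha * 1"
    using k0 m_le[OF xy(2)] by (intro mult_mono) auto
  moreover have "0 \<le> (k0 + 1) * s powr nu"
    using k0 by simp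
  ultimately show "\<bar>k0 * s powr alpha * max y 0 powr p\<bar> \<le> (k0 + 1) * (s powr alpha + s powr nu)"
    using k0 by (simp add: distrib_left add_increasing2)
qed

lemma regular_sol_perturbation:
  fixes N :: nat and alpha nu k0 p \<sigma> :: real and Kr fr w U :: "real \<Rightarrow> real"
  defines "\<Gamma> \<equiv> (\<sigma> powr (alpha + 2) / (alpha + 2) + \<sigma> powr (nu + 2) / (nu + 2)) / (real N - 2)
                 * exp ((k0 + 1) * p / (real N - 2) * \<sigma> powr (alpha + 2) / (alpha + 2))"
  defines "\<Gamma>' \<equiv> ((k0 + 1) * p * \<Gamma> + 1)
                 * (\<sigma> powr (alpha + 1) / (real N + alpha) + \<sigma> powr (nu + 1) / (real N + nu))"
  assumes N: "N \<ge> 3" and alpha: "alpha > -2" and nu: "nu > -2" and k0: "k0 > 0" and p: "p \<ge> 1"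
    and \<sigma>: "0 < \<sigma>" "\<sigma> < R"
    and solw: "regular_sol N (\<lambda>s x. Kr s * max x 0 powr p + fr s) 1 w"
    and solU: "regular_sol N (\<lambda>s x. k0 * s powr alpha * max x 0 powr p) 1 U"
    and Kr_cont: "continuous_on {0<..} Kr" and fr_cont: "continuous_on {0<..} fr"
    and Kr_nonneg: "\<And>s. 0 < s \<Longrightarrow> 0 \<le> Kr s" and fr_nonneg: "\<And>s. 0 < s \<Longrightarrow> 0 \<le> fr s"
    and e: "0 \<le> e" "e \<le> 1"
    and Kr_close: "\<And>s. 0 < s \<Longrightarrow> s \<le> R \<Longrightarrow> \<bar>Kr s - k0 * s powr alpha\<bar> \<le> e * s powr alpha"
    and fr_small: "\<And>s. 0 < s \<Longrightarrow> s \<le> R \<Longrightarrow> fr s \<le> e * s powr nu"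
  shows "\<forall>\<rho>\<in>{0..\<sigma>}. \<bar>w \<rho> - U \<rho>\<bar> \<le> e * \<Gamma>"
    and "(w has_real_derivative deriv w \<sigma>) (at \<sigma>)" and "(U has_real_derivative deriv U \<sigma>) (at \<sigma>)"
    and "\<bar>deriv w \<sigma> - deriv U \<sigma>\<bar> \<le> e * \<Gamma>'"
proof -
  define c where "c = (k0 + 1) * p"
  have c: "c \<ge> 0" using k0 p by (simp add: c_def)
  have \<Gamma>: "\<Gamma> \<ge> 0"
    unfolding \<Gamma>_def
    by (intro mult_nonneg_nonneg divide_nonneg_nonneg[OF add_nonneg_nonneg]) (use N alpha nu in auto)
  have w_cont: "continuous_on {0..} w" and U_cont: "continuous_on {0..} U"
    using solw solU by (simp_all add: regular_sol_iff)
  have w_le: "w s \<le> 1" if "s \<ge> 0" for s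
    using regular_sol_le_initial[OF N solw _ that] Kr_nonneg fr_nonneg by simp
  have U_le: "U s \<le> 1" if "s \<ge> 0" for s
    using regular_sol_le_initial[OF N solU _ that] k0 by simp
  have bounds:
    "\<bar>(Kr s * max (w s) 0 powr p + fr s) - k0 * s powr alpha * max (U s) 0 powr p\<bar>
       \<le> c * s powr alpha * \<bar>w s - U s\<bar> + e * (s powr alpha + s powr nu)"
    "\<bar>Kr s * max (w s) 0 powr p + fr s\<bar> \<le> (k0 + 1) * (s powr alpha + s powr nu)"
    "\<bar>k0 * s powr alpha * max (U s) 0 powr p\<bar> \<le> (k0 + 1) * (s powr alpha + s powr nu)"
    if s: "0 < s" "s \<le> R" for s
    using perturbed_nonlinearity_bounds[OF s(1) p less_imp_le[OF k0] e(2) Kr_nonneg[OF s(1)] Kr_close[OF s]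
        fr_nonneg[OF s(1)] fr_small[OF s] w_le[of s] U_le[of s]] s
    by (simp_all add: c_def)
  have close: "\<bar>w \<rho> - U \<rho>\<bar> \<le> e * \<Gamma>" if "0 \<le> \<rho>" "\<rho> \<le> \<sigma>" for \<rho>
  proof -
    have "\<bar>w \<rho> - U \<rho>\<bar> \<le> e * (\<sigma> powr (alpha + 2) / (alpha + 2) + \<sigma> powr (nu + 2) / (nu + 2)) / (real N - 2)
        * exp (c / (real N - 2) * \<sigma> powr (alpha + 2) / (alpha + 2))"
      using \<sigma> that bounds(1)
      by (intro regular_sol_compare[OF N solw solU \<sigma>(1) alpha nu c e(1)]) auto
    then show ?thesis
      by (simp add: \<Gamma>_def c_def mult.assoc)
  qed
  then show "\<forall>\<rho>\<in>{0..\<sigma>}. \<bar>w \<rho> - U \<rho>\<bar> \<le> e * \<Gamma>"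
    by auto
  have cont_w: "continuous_on {0<..<R} (\<lambda>s. Kr s * max (w s) 0 powr p + fr s)"
    using p
    by (intro continuous_intros continuous_on_powr' continuous_on_subset[OF Kr_cont]
          continuous_on_subset[OF fr_cont] continuous_on_subset[OF w_cont]) auto
  have cont_U: "continuous_on {0<..<R} (\<lambda>s. k0 * s powr alpha * max (U s) 0 powr p)"
    using p by (intro continuous_intros continuous_on_powr' continuous_on_subset[OF U_cont]) auto
  have diff: "\<bar>(Kr s * max (w s) 0 powr p + fr s) - k0 * s powr alpha * max (U s) 0 powr p\<bar>
      \<le> (c * (e * \<Gamma>) + e) * (s powr alpha + s powr nu)"
    if "0 < s" "s \<le> \<sigma>" for s
  proof -
    have "c * s powr alpha * \<bar>w s - U s\<bar> \<le> c * s powr alpha * (e * \<Gamma>)"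
      using close[of s] that c by (intro mult_left_mono) auto
    moreover have "0 \<le> c * (e * \<Gamma>) * s powr nu"
      using c e \<Gamma> by simp
    ultimately show ?thesis
      using bounds(1)[of s] that \<sigma> by (simp add: algebra_simps)
  qed
  have D: "c * (e * \<Gamma>) + e \<ge> 0"
    using c e \<Gamma> by simp
  note deriv_bound = regular_sol_deriv_diff_bound[where C = "k0 + 1" and D = "c * (e * \<Gamma>) + e",
      OF N solw solU \<sigma> alpha nu cont_w cont_U]
  show "(w has_real_derivative deriv w \<sigma>) (at \<sigma>)" "(U has_real_derivative deriv U \<sigma>) (at \<sigma>)"
    using deriv_bound(1,2) bounds(2,3) D diff by (simp_all add: less_imp_le)
  have "\<bar>deriv w \<sigma> - deriv U \<sigma>\<bar>
      \<le> (c * (e * \<Gamma>) + e) * (\<sigma> powr (alpha + 1) / (real N + alpha) + \<sigma> powr (nu + 1) / (real N + nu))"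
    using deriv_bound(3) bounds(2,3) D diff by (simp add: less_imp_le)
  then show "\<bar>deriv w \<sigma> - deriv U \<sigma>\<bar> \<le> e * \<Gamma>'"
    by (simp add: \<Gamma>'_def c_def algebra_simps add_divide_distrib)
qed

section \<open>The model equation\<close>

lemma model_sol_unique:
  fixes N :: nat and v1 v2 :: "real \<Rightarrow> real"
  assumes N: "N \<ge> 3" and alpha: "alpha > -2" and k0: "k0 \<ge> 0" and p: "p \<ge> 1" and z: "z > 0"
    and sol1: "regular_sol N (\<lambda>s x. k0 * s powr alpha * max x 0 powr p) z v1"
    and sol2: "regular_sol N (\<lambda>s x. k0 * s powr alpha * max x 0 powr p) z v2"
    and r: "r \<ge> 0"
  shows "v1 r = v2 r"
proof -
  have le: "v1 s \<le> z" "v2 s \<le> z" if "s \<ge> 0" for s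
    using regular_sol_le_initial[OF N sol1 _ that] regular_sol_le_initial[OF N sol2 _ that] k0
    by simp_all
  have "\<bar>v1 r - v2 r\<bar> \<le> 0 * ((r + 1) powr (alpha + 2) / (alpha + 2) + (r + 1) powr (alpha + 2) / (alpha + 2))
      / (real N - 2) * exp (k0 * (p * z powr (p - 1)) / (real N - 2) * (r + 1) powr (alpha + 2) / (alpha + 2))"
  proof (rule regular_sol_compare[OF N sol1 sol2 _ alpha alpha])
    fix s :: real assume s: "0 < s" "s \<le> r + 1"
    have "\<bar>k0 * s powr alpha * max (v1 s) 0 powr p - k0 * s powr alpha * max (v2 s) 0 powr p\<bar>
        = k0 * s powr alpha * \<bar>max (v1 s) 0 powr p - max (v2 s) 0 powr p\<bar>"
      using k0 by (simp add: right_diff_distrib[symmetric] abs_mult)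
    also have "\<dots> \<le> k0 * s powr alpha * (p * z powr (p - 1) * \<bar>v1 s - v2 s\<bar>)"
      using max0_powr_lipschitz[OF p _ le[of s]] s k0 z by (intro mult_left_mono) auto
    finally show "\<bar>k0 * s powr alpha * max (v1 s) 0 powr p - k0 * s powr alpha * max (v2 s) 0 powr p\<bar>
        \<le> k0 * (p * z powr (p - 1)) * s powr alpha * \<bar>v1 s - v2 s\<bar> + 0 * (s powr alpha + s powr alpha)"
      by (simp add: algebra_simps)
  qed (use r k0 p z in auto)
  then show ?thesis by simp
qed

lemma model_sol_scaling:
  fixes N :: nat and U v :: "real \<Rightarrow> real"
  assumes N: "N \<ge> 3" and alpha: "alpha > -2" and k0: "k0 \<ge> 0" and p: "p \<ge> 1" and z: "z > 0"
    and l: "l > 0" "l powr (2 + alpha) = z powr (1 - p)"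
    and solU: "regular_sol N (\<lambda>s x. k0 * s powr alpha * max x 0 powr p) 1 U"
    and sol: "regular_sol N (\<lambda>s x. k0 * s powr alpha * max x 0 powr p) z v"
    and r: "r \<ge> 0"
  shows "v r = z * U (r / l)"
proof -
  have "regular_sol N (\<lambda>s x. k0 * s powr alpha * max x 0 powr p) (z * 1) (\<lambda>r. z * U ((1 / l) * r))"
  proof (rule regular_sol_rescale[OF solU z])
    show "1 / l > 0" using l by simp
    fix s x :: real assume s: "s > 0"
    have "max (x / z) 0 = max x 0 / z"
      using z by (auto simp: max_def divide_le_0_iff)
    then have "max (x / z) 0 powr p = max x 0 powr p / z powr p"
      using z by (simp add: powr_divide)
    moreover have "((1 / l) * s) powr alpha = s powr alpha / l powr alpha"
      using s l by (simp add: powr_divide)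
    ultimately have "z * (1 / l)\<^sup>2 * (k0 * ((1 / l) * s) powr alpha * max (x / z) 0 powr p)
        = k0 * s powr alpha * max x 0 powr p * (z * (1 / l)\<^sup>2 / l powr alpha / z powr p)"
      by (simp add: divide_inverse ac_simps)
    also have "z * (1 / l)\<^sup>2 / l powr alpha / z powr p = 1"
    proof -
      have "l\<^sup>2 * l powr alpha = l powr (2 + alpha)"
        using l by (simp add: powr_add powr_numeral)
      moreover have "z powr (1 - p) * z powr p = z"
        using z by (simp add: powr_add[symmetric])
      ultimately show ?thesis
        using l z by (simp add: field_simps)
    qed
    finally show "k0 * s powr alpha * max x 0 powr p
        = z * (1 / l)\<^sup>2 * (k0 * ((1 / l) * s) powr alpha * max (x / z) 0 powr p)"
      by (metis mult_1_right)
  qed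
  then show ?thesis
    using model_sol_unique[OF N alpha k0 p z sol _ r] by simp
qed

text \<open>Pohozaev function of v'' + (n - 1)/x v' + k0 x^alpha v^p = 0, with w = v'. Along positive
  solutions its derivative is a positive multiple of (n + alpha)/(p + 1) - (n - 2)/2, which is
  negative exactly when p > p_S(alpha).\<close>
definition pohozaev ::
  "real \<Rightarrow> real \<Rightarrow> real \<Rightarrow> real \<Rightarrow> (real \<Rightarrow> real) \<Rightarrow> (real \<Rightarrow> real) \<Rightarrow> real \<Rightarrow> real" where
  "pohozaev n k0 alpha p v w x = x powr n * (w x)\<^sup>2 / 2 + k0 * x powr (n + alpha) * v x powr (p + 1) / (p + 1)
     + (n - 2) / 2 * x powr (n - 1) * v x * w x"

lemma pohozaev_has_derivative:
  fixes v w :: "real \<Rightarrow> real"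
  assumes x: "x > 0" and vx: "v x > 0" and p: "p > -1"
    and dv: "(v has_real_derivative w x) (at x)"
    and dw: "(w has_real_derivative - ((n - 1) / x) * w x - k0 * x powr alpha * v x powr p) (at x)"
  shows "(pohozaev n k0 alpha p v w has_real_derivative
      k0 * ((n + alpha) / (p + 1) - (n - 2) / 2) * x powr (n + alpha - 1) * v x powr (p + 1)) (at x)"
proof -
  define W' where "W' = - ((n - 1) / x) * w x - k0 * x powr alpha * v x powr p"
  have dw': "(w has_real_derivative W') (at x)"
    unfolding W'_def by (rule dw)
  have dpn: "((\<lambda>x. x powr n) has_real_derivative n * x powr (n - 1)) (at x)"
    by (rule has_real_derivative_powr[OF x])
  have dpna: "((\<lambda>x. x powr (n + alpha)) has_real_derivative (n + alpha) * x powr (n + alpha - 1)) (at x)"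
    by (rule has_real_derivative_powr[OF x])
  have dpn1: "((\<lambda>x. x powr (n - 1)) has_real_derivative (n - 1) * x powr (n - 1 - 1)) (at x)"
    by (rule has_real_derivative_powr[OF x])
  have dvp: "((\<lambda>x. v x powr (p + 1)) has_real_derivative (p + 1) * v x powr p * w x) (at x)"
    using DERIV_fun_powr[OF dv vx, of "p + 1"] by simp
  have dw2: "((\<lambda>x. (w x)\<^sup>2) has_real_derivative 2 * w x * W') (at x)"
    using DERIV_mult'[OF dw' dw'] by (simp add: power2_eq_square algebra_simps)
  have raw: "(pohozaev n k0 alpha p v w has_real_derivative
      (x powr n * (2 * w x * W') + n * x powr (n - 1) * (w x)\<^sup>2) / 2
      + (k0 * x powr (n + alpha) * ((p + 1) * v x powr p * w x)
         + k0 * ((n + alpha) * x powr (n + alpha - 1)) * v x powr (p + 1)) / (p + 1)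
      + ((n - 2) / 2 * x powr (n - 1) * v x * W'
         + ((n - 2) / 2 * x powr (n - 1) * w x + (n - 2) / 2 * ((n - 1) * x powr (n - 1 - 1)) * v x) * w x))
      (at x)"
    unfolding pohozaev_def
    by (intro DERIV_add DERIV_cdivide DERIV_mult' DERIV_cmult dpn dpna dpn1 dvp dw2 dv dw')
  have e1: "x powr n = x * x powr (n - 1)"
    and e2: "x powr (n + alpha) = x * x powr (n - 1) * x powr alpha"
    and e3: "x powr (n + alpha - 1) = x powr (n - 1) * x powr alpha"
    using x by (simp_all add: powr_add powr_diff)
  have e4: "x powr (n - 1 - 1) = x powr (n - 1) / x"
    using x by (simp add: powr_diff power2_eq_square)
  have e5: "v x powr (p + 1) = v x powr p * v x"
    using vx by (simp add: powr_add)
  have alg: "(Pn * (2 * W * W'') + n * X * W\<^sup>2) / 2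
      + (k0 * Pna * ((p + 1) * V * W) + k0 * ((n + alpha) * Pna1) * M) / (p + 1)
      + ((n - 2) / 2 * X * vv * W'' + ((n - 2) / 2 * X * W + (n - 2) / 2 * ((n - 1) * Pn2) * vv) * W)
      = k0 * ((n + alpha) / (p + 1) - (n - 2) / 2) * Pna1 * M"
    if "Pn = x * X" "Pna = x * X * xa" "Pna1 = X * xa" "Pn2 = X / x" "M = V * vv"
       "W'' = - ((n - 1) / x) * W - k0 * xa * V"
    for Pn Pna Pna1 Pn2 X xa V vv W W'' M
  proof -
    have "x \<noteq> 0" "p + 1 \<noteq> 0" using x p by auto
    then show ?thesis
      unfolding that by (simp add: divide_simps power2_eq_square) (simp add: algebra_simps)
  qed
  from raw show ?thesis
    unfolding alg[OF e1 e2 e3 e4 e5 W'_def] .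
qed

lemma pohozaev_decreasing:
  fixes v w :: "real \<Rightarrow> real"
  assumes k0: "k0 > 0" and p: "p > -1" and supercritical: "(n + alpha) / (p + 1) < (n - 2) / 2"
    and v_cont: "continuous_on {0<..R} v" and w_cont: "continuous_on {0<..R} w"
    and v_pos: "\<And>x. 0 < x \<Longrightarrow> x < R \<Longrightarrow> v x > 0" and vR: "v R \<ge> 0"
    and dv: "\<And>x. 0 < x \<Longrightarrow> x < R \<Longrightarrow> (v has_real_derivative w x) (at x)"
    and dw: "\<And>x. 0 < x \<Longrightarrow> x < R \<Longrightarrow>
               (w has_real_derivative - ((n - 1) / x) * w x - k0 * x powr alpha * v x powr p) (at x)"
    and ab: "0 < a" "a < b" "b \<le> R"
  shows "pohozaev n k0 alpha p v w b < pohozaev n k0 alpha p v w a"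
proof (rule DERIV_neg_imp_decreasing_open[OF \<open>a < b\<close>])
  fix x assume x: "a < x" "x < b"
  show "\<exists>D. (pohozaev n k0 alpha p v w has_real_derivative D) (at x) \<and> D < 0"
  proof (intro exI conjI)
    show "(pohozaev n k0 alpha p v w has_real_derivative
        k0 * ((n + alpha) / (p + 1) - (n - 2) / 2) * x powr (n + alpha - 1) * v x powr (p + 1)) (at x)"
      using x ab p v_pos[of x] by (intro pohozaev_has_derivative dv dw) auto
    show "k0 * ((n + alpha) / (p + 1) - (n - 2) / 2) * x powr (n + alpha - 1) * v x powr (p + 1) < 0"
      using k0 supercritical v_pos[of x] x ab by (simp add: mult_pos_neg mult_neg_pos)
  qed
next
  have "continuous_on {a..b} v" "continuous_on {a..b} w"
    using ab by (auto intro: continuous_on_subset[OF v_cont] continuous_on_subset[OF w_cont])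
  moreover have "v x \<ge> 0" if "x \<in> {a..b}" for x
    using that ab v_pos[of x] vR by (cases "x = R") auto
  ultimately show "continuous_on {a..b} (pohozaev n k0 alpha p v w)"
    unfolding pohozaev_def using ab p
    by (intro continuous_intros continuous_on_powr') auto
qed

lemma pohozaev_tendsto_0:
  fixes v w :: "real \<Rightarrow> real"
  assumes n: "n \<ge> 2" and alpha: "alpha > -2" and k0: "k0 \<ge> 0" and p: "p > -1" and d: "d > 0"
    and v: "\<And>t. 0 < t \<Longrightarrow> t < d \<Longrightarrow> 0 \<le> v t \<and> v t \<le> z"
    and w: "\<And>t. 0 < t \<Longrightarrow> t < d \<Longrightarrow> \<bar>w t\<bar> \<le> C * t powr (alpha + 1)"
  shows "(pohozaev n k0 alpha p v w \<longlongrightarrow> 0) (at_right 0)"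
proof (rule Lim_null_comparison)
  define B where "B = (\<lambda>t. C\<^sup>2 / 2 * t powr (n + alpha + (alpha + 2))
      + k0 * z powr (p + 1) / (p + 1) * t powr (n + alpha) + (n - 2) / 2 * z * C * t powr (n + alpha))"
  have "((\<lambda>t::real. t powr e) \<longlongrightarrow> 0) (at_right 0)" if "e > 0" for e
    using that by (intro tendsto_zero_powrI tendsto_ident_at tendsto_const)
       (auto simp: eventually_at_right_field intro: exI[of _ 1])
  then have "(B \<longlongrightarrow> C\<^sup>2 / 2 * 0 + k0 * z powr (p + 1) / (p + 1) * 0 + (n - 2) / 2 * z * C * 0) (at_right 0)"
    unfolding B_def using n alpha by (intro tendsto_intros) auto
  then show "(B \<longlongrightarrow> 0) (at_right 0)" by simp
  show "\<forall>\<^sub>F t in at_right 0. norm (pohozaev n k0 alpha p v w t) \<le> B t"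
    unfolding eventually_at_right_field
  proof (intro exI[of _ d] conjI allI impI)
    fix t :: real assume t: "0 < t" "t < d"
    have vt: "0 \<le> v t" "v t \<le> z" and wt: "\<bar>w t\<bar> \<le> C * t powr (alpha + 1)"
      using v[of t] w[of t] t by auto
    have C: "C \<ge> 0"
      using wt by (smt (verit) powr_gt_zero t zero_le_mult_iff)
    have "(w t)\<^sup>2 \<le> (C * t powr (alpha + 1))\<^sup>2"
      using wt C by (simp add: abs_le_square_iff[symmetric])
    then have "\<bar>t powr n * (w t)\<^sup>2 / 2\<bar> \<le> t powr n * (C * t powr (alpha + 1))\<^sup>2 / 2"
      by (simp add: abs_mult mult_left_mono)
    also have "\<dots> = C\<^sup>2 / 2 * t powr (n + alpha + (alpha + 2))"
    proof -
      have "n + alpha + (alpha + 2) = n + (alpha + 1) + (alpha + 1)" by simp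
      then have "t powr (n + alpha + (alpha + 2)) = t powr n * t powr (alpha + 1) * t powr (alpha + 1)"
        by (simp only: powr_add)
      then show ?thesis
        by (simp add: power2_eq_square)
    qed
    finally have 1: "\<bar>t powr n * (w t)\<^sup>2 / 2\<bar> \<le> C\<^sup>2 / 2 * t powr (n + alpha + (alpha + 2))" .
    have "v t powr (p + 1) \<le> z powr (p + 1)"
      using vt p by (intro powr_mono2) auto
    then have 2: "\<bar>k0 * t powr (n + alpha) * v t powr (p + 1) / (p + 1)\<bar>
        \<le> k0 * z powr (p + 1) / (p + 1) * t powr (n + alpha)"
      using k0 p by (simp add: abs_mult divide_right_mono mult_left_mono mult.commute mult.left_commute)
    have "\<bar>(n - 2) / 2 * t powr (n - 1) * v t * w t\<bar> \<le> (n - 2) / 2 * t powr (n - 1) * z * (C * t powr (alpha + 1))"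
      using n vt wt by (simp add: abs_mult mult_mono mult_left_mono)
    also have "\<dots> = (n - 2) / 2 * z * C * t powr (n + alpha)"
      using t by (simp add: powr_add[symmetric] algebra_simps)
    finally have 3: "\<bar>(n - 2) / 2 * t powr (n - 1) * v t * w t\<bar> \<le> (n - 2) / 2 * z * C * t powr (n + alpha)" .
    have tri: "\<bar>a + b + c\<bar> \<le> \<bar>a\<bar> + \<bar>b\<bar> + \<bar>c\<bar>" for a b c :: real
      by linarith
    have "\<bar>t powr n * (w t)\<^sup>2 / 2 + k0 * t powr (n + alpha) * v t powr (p + 1) / (p + 1)
        + (n - 2) / 2 * t powr (n - 1) * v t * w t\<bar> \<le> B t"
      unfolding B_def by (rule order_trans[OF tri]) (intro add_mono 1 2 3)
    then show "norm (pohozaev n k0 alpha p v w t) \<le> B t"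
      by (simp add: pohozaev_def)
  qed (rule d)
qed

lemma supercritical_gt_1:
  assumes N: "N \<ge> 3" and alpha: "alpha > -2" and p: "p > (real N + 2 + 2 * alpha) / (real N - 2)"
  shows "p > 1"
proof -
  have "real N + 2 + 2 * alpha < p * (real N - 2)"
    using p N by (simp add: pos_divide_less_eq)
  then have "1 * (real N - 2) < p * (real N - 2)"
    using alpha by simp
  then show ?thesis
    using N by (simp add: mult_less_cancel_right)
qed

lemma model_sol_ode:
  fixes N :: nat and k0 alpha p z :: real and v :: "real \<Rightarrow> real"
  defines "h \<equiv> \<lambda>s. k0 * s powr alpha * max (v s) 0 powr p"
  assumes N: "N \<ge> 3" and alpha: "alpha > -2" and k0: "k0 \<ge> 0" and p: "p > 0" and z: "z > 0"
    and sol: "regular_sol N (\<lambda>s x. k0 * s powr alpha * max x 0 powr p) z v" and x: "x > 0"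
  shows "(v has_real_derivative - radial_flux (real N) h x) (at x)"
    and "((\<lambda>x. - radial_flux (real N) h x) has_real_derivative (real N - 1) / x * radial_flux (real N) h x - h x) (at x)"
    and "\<bar>radial_flux (real N) h x\<bar> \<le> 2 * k0 * z powr p / (real N + alpha) * x powr (alpha + 1)"
proof -
  have v_cont: "continuous_on {0..} v"
    using sol by (simp add: regular_sol_iff)
  have h_cont: "continuous_on {0<..<x + 1} h"
    unfolding h_def using p
    by (intro continuous_intros continuous_on_powr' continuous_on_subset[OF v_cont]) auto
  have h_bound: "\<bar>h s\<bar> \<le> k0 * z powr p * (s powr alpha + s powr alpha)" if "0 < s" for s
  proof -
    have "v s \<le> z"
      using regular_sol_le_initial[OF N sol] that k0 by simp
    then have "max (v s) 0 powr p \<le> z powr p"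
      using z p by (intro powr_mono2) auto
    then have "\<bar>h s\<bar> \<le> k0 * s powr alpha * z powr p"
      using k0 that by (simp add: h_def abs_mult mult_left_mono)
    moreover have "0 \<le> k0 * s powr alpha * z powr p"
      using k0 by simp
    ultimately show ?thesis
      by (simp add: algebra_simps)
  qed
  have I: "(\<lambda>s. s powr (real N - 1) * h s) integrable_on {0..x + 1}"
    using x N alpha h_bound
    by (intro powr_weighted_integrable[OF h_cont, where a = alpha and b = alpha]) auto
  show "(v has_real_derivative - radial_flux (real N) h x) (at x)"
    using regular_sol_has_derivative[OF N sol h_cont[unfolded h_def] alpha alpha h_bound[unfolded h_def]] x
    by (simp add: h_def)
  show "((\<lambda>x. - radial_flux (real N) h x) has_real_derivative (real N - 1) / x * radial_flux (real N) h x - h x) (at x)"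
    using DERIV_minus[OF radial_flux_has_derivative[OF I h_cont, of x]] x by simp
  have "\<bar>radial_flux (real N) h x\<bar>
      \<le> k0 * z powr p * (x powr (alpha + 1) / (real N + alpha) + x powr (alpha + 1) / (real N + alpha))"
    using x N alpha k0 z h_bound
    by (intro radial_flux_bound integrable_on_subinterval[OF I]) auto
  also have "\<dots> = 2 * k0 * z powr p / (real N + alpha) * x powr (alpha + 1)"
    by (simp add: field_simps)
  finally show "\<bar>radial_flux (real N) h x\<bar> \<le> 2 * k0 * z powr p / (real N + alpha) * x powr (alpha + 1)" .
qed

lemma model_sol_pos:
  fixes N :: nat and v :: "real \<Rightarrow> real"
  assumes N: "N \<ge> 3" and alpha: "alpha > -2" and k0: "k0 > 0"
    and p: "p > (real N + 2 + 2 * alpha) / (real N - 2)" and z: "z > 0"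
    and sol: "regular_sol N (\<lambda>s x. k0 * s powr alpha * max x 0 powr p) z v" and r: "r \<ge> 0"
  shows "v r > 0"
proof (rule ccontr)
  assume "\<not> v r > 0"
  define n where "n = real N"
  have n: "n \<ge> 3" using N by (simp add: n_def)
  have p1: "p > 1"
    using supercritical_gt_1[OF N alpha p] .
  have "n + 2 + 2 * alpha < p * (n - 2)"
    using p n by (simp add: n_def pos_divide_less_eq)
  then have "2 * (n + alpha) < (n - 2) * (p + 1)"
    by (simp add: algebra_simps)
  then have supercritical: "(n + alpha) / (p + 1) < (n - 2) / 2"
    using p1 by (simp add: field_simps)
  have v_cont: "continuous_on {0..} v" and v0: "v 0 = z"
    using sol by (auto simp: regular_sol_iff)
  obtain R where R: "R > 0" "v R = 0" and v_pos: "\<And>x. 0 \<le> x \<Longrightarrow> x < R \<Longrightarrow> v x > 0"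
    using first_zero_exists[OF v_cont _ r] \<open>\<not> v r > 0\<close> v0 z by auto
  define h where "h = (\<lambda>s. k0 * s powr alpha * max (v s) 0 powr p)"
  define w where "w = (\<lambda>x. - radial_flux n h x)"
  note ode = model_sol_ode[OF N alpha less_imp_le[OF k0] _ z sol, folded h_def n_def w_def]
  have dw: "(w has_real_derivative - ((n - 1) / x) * w x - k0 * x powr alpha * v x powr p) (at x)"
    if "0 < x" "x < R" for x
    using ode(2)[of x] p1 v_pos[of x] that by (simp add: w_def h_def)
  have w_cont: "continuous_on {0<..} w"
    unfolding w_def using DERIV_isCont[OF ode(2)] p1 by (simp add: continuous_on_eq_continuous_at)
  define P where "P = pohozaev n k0 alpha p v w"
  have P_decreasing: "P b < P a" if "0 < a" "a < b" "b \<le> R" for a b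
    unfolding P_def using k0 p1 supercritical R(2) v_pos ode(1) dw that
    by (intro pohozaev_decreasing[where R = R] continuous_on_subset[OF v_cont]
          continuous_on_subset[OF w_cont]) (auto simp: w_def)
  have "(P \<longlongrightarrow> 0) (at_right 0)"
    unfolding P_def
  proof (rule pohozaev_tendsto_0[where d = R and z = z and C = "2 * k0 * z powr p / (n + alpha)"])
    fix t assume t: "0 < t" "t < R"
    show "0 \<le> v t \<and> v t \<le> z"
      using v_pos[of t] regular_sol_le_initial[OF N sol, of t] k0 t by auto
    show "\<bar>w t\<bar> \<le> 2 * k0 * z powr p / (n + alpha) * t powr (alpha + 1)"
      using ode(3)[of t] p1 t by (simp add: w_def)
  qed (use n alpha k0 p1 R in auto)
  then have "P (R / 2) \<le> 0"
  proof (rule tendsto_lowerbound)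
    show "\<forall>\<^sub>F t in at_right 0. P (R / 2) \<le> P t"
      unfolding eventually_at_right_field
      using P_decreasing R by (intro exI[of _ "R / 2"]) (auto intro: less_imp_le)
  qed simp
  moreover have "P R \<ge> 0"
    unfolding P_def pohozaev_def using R by simp
  ultimately show False
    using P_decreasing[of "R / 2" R] R by simp
qed

section \<open>Rescaling the perturbed problem\<close>

locale perturbed_lane_emden =
  fixes N :: nat and mu alpha k0 nu p :: real
    and K f :: "real \<Rightarrow> real"
    and u ubar :: "real \<Rightarrow> real \<Rightarrow> real"
  assumes N: "N \<ge> 3"
    and mu: "mu \<ge> 0"
    and K_cont: "continuous_on {0<..} K"
    and K_pos: "\<And>r. r > 0 \<Longrightarrow> K r > 0"
    and alpha: "alpha > -2" and k0: "k0 > 0"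
    and K_asym: "((\<lambda>r. K r / r powr alpha) \<longlongrightarrow> k0) (at_right 0)"
    and f_cont: "continuous_on {0<..} f"
    and f_nonneg: "\<And>r. r > 0 \<Longrightarrow> f r \<ge> 0"
    and nu: "nu > -2"
    and f_bigO: "f \<in> O[at_right 0](\<lambda>r. r powr nu)"
    and p_supercritical: "p > (real N + 2 + 2 * alpha) / (real N - 2)"
    and u_sol: "\<And>zeta. zeta > 0 \<Longrightarrow>
       regular_sol N (\<lambda>s v. K s * (max v 0) powr p + mu * f s) zeta (\<lambda>r. u r zeta)"
    and ubar_sol: "\<And>zeta. zeta > 0 \<Longrightarrow>
       regular_sol N (\<lambda>s v. k0 * s powr alpha * (max v 0) powr p) zeta (\<lambda>r. ubar r zeta)"
begin

lemma p_gt_1: "p > 1"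
  using supercritical_gt_1[OF N alpha p_supercritical] .

definition length_scale :: "real \<Rightarrow> real" where
  "length_scale zeta = zeta powr (-1 / ((2 + alpha) / (p - 1)))"

definition rescaled :: "real \<Rightarrow> real \<Rightarrow> real" where
  "rescaled zeta rho = u (length_scale zeta * rho) zeta / zeta"

definition profile :: "real \<Rightarrow> real" where
  "profile = (\<lambda>r. ubar r 1)"

lemma length_scale_pos: "zeta > 0 \<Longrightarrow> length_scale zeta > 0"
  by (simp add: length_scale_def)

lemma length_scale_powr: "length_scale zeta powr (2 + alpha) = zeta powr (1 - p)"
proof -
  have "-1 / ((2 + alpha) / (p - 1)) * (2 + alpha) = 1 - p"
    using alpha p_gt_1 by (simp add: field_simps)
  then show ?thesis
    by (simp add: length_scale_def powr_powr)
qed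

lemma length_scale_tendsto_0: "(length_scale \<longlongrightarrow> 0) at_top"
  unfolding length_scale_def using alpha p_gt_1
  by (intro tendsto_neg_powr[OF _ filterlim_ident]) (simp add: field_simps)

lemma length_scale_weight_tendsto_0: "((\<lambda>zeta. length_scale zeta powr (2 + nu) / zeta) \<longlongrightarrow> 0) at_top"
proof -
  have "0 < (2 + nu) * (p - 1) / (2 + alpha)"
    using alpha nu p_gt_1 by simp
  then have "((\<lambda>zeta. zeta powr (- ((2 + nu) * (p - 1) / (2 + alpha)) - 1)) \<longlongrightarrow> 0) at_top"
    by (intro tendsto_neg_powr[OF _ filterlim_ident]) linarith
  moreover have "\<forall>\<^sub>F zeta in at_top. zeta powr (- ((2 + nu) * (p - 1) / (2 + alpha)) - 1)
      = length_scale zeta powr (2 + nu) / zeta"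
  proof (rule eventually_mono[OF eventually_gt_at_top[of 0]])
    have e: "-1 / ((2 + alpha) / (p - 1)) * (2 + nu) = - ((2 + nu) * (p - 1) / (2 + alpha))"
      using alpha p_gt_1 by (simp add: field_simps)
    fix zeta :: real assume "zeta > 0"
    then show "zeta powr (- ((2 + nu) * (p - 1) / (2 + alpha)) - 1) = length_scale zeta powr (2 + nu) / zeta"
      unfolding length_scale_def powr_powr e by (simp add: powr_diff)
  qed
  ultimately show ?thesis
    by (rule Lim_transform_eventually)
qed

lemma rescaled_sol:
  assumes zeta: "zeta > 0"
  shows "regular_sol N (\<lambda>s x. K (length_scale zeta * s) / length_scale zeta powr alpha * max x 0 powr p
           + mu * ((length_scale zeta)\<^sup>2 / zeta * f (length_scale zeta * s))) 1 (rescaled zeta)"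
proof -
  define l where "l = length_scale zeta"
  have l: "l > 0" "l powr (2 + alpha) = zeta powr (1 - p)"
    using length_scale_pos[OF zeta] length_scale_powr by (simp_all add: l_def)
  have "regular_sol N (\<lambda>s x. K (l * s) / l powr alpha * max x 0 powr p + mu * (l\<^sup>2 / zeta * f (l * s)))
      ((1 / zeta) * zeta) (\<lambda>r. (1 / zeta) * u (l * r) zeta)"
  proof (rule regular_sol_rescale[OF u_sol[OF zeta]])
    fix s x :: real
    have "max (x / (1 / zeta)) 0 = zeta * max x 0"
      using zeta by (auto simp: max_def mult_le_0_iff)
    then have m: "max (x / (1 / zeta)) 0 powr p = zeta powr p * max x 0 powr p"
      using zeta by (simp add: powr_mult)
    have "l\<^sup>2 * l powr alpha = l powr (2 + alpha)"
      using l by (simp add: powr_add powr_numeral)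
    moreover have "zeta powr (1 - p) * zeta powr p = zeta"
      using zeta by (simp add: powr_add[symmetric])
    ultimately have "l\<^sup>2 * l powr alpha * zeta powr p = zeta"
      using l by simp
    then have key: "l\<^sup>2 * zeta powr p / zeta = 1 / l powr alpha"
      using l zeta by (simp add: field_simps)
    have "1 / zeta * l\<^sup>2 * (K (l * s) * max (x / (1 / zeta)) 0 powr p + mu * f (l * s))
        = K (l * s) * max x 0 powr p * (l\<^sup>2 * zeta powr p / zeta) + mu * (l\<^sup>2 / zeta * f (l * s))"
      unfolding m using zeta by (simp add: field_simps)
    then show "K (l * s) / l powr alpha * max x 0 powr p + mu * (l\<^sup>2 / zeta * f (l * s))
        = 1 / zeta * l\<^sup>2 * (K (l * s) * max (x / (1 / zeta)) 0 powr p + mu * f (l * s))"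
      unfolding key by simp
  qed (use zeta l in auto)
  moreover have "(\<lambda>r. (1 / zeta) * u (l * r) zeta) = rescaled zeta"
    by (simp add: fun_eq_iff rescaled_def l_def)
  ultimately show ?thesis
    using zeta by (simp add: l_def)
qed

lemma rescaled_coefficients_converge:
  assumes R: "R > 0" and e: "e > 0"
  shows "\<forall>\<^sub>F zeta in at_top. zeta > 0 \<and> (\<forall>s. 0 < s \<longrightarrow> s \<le> R \<longrightarrow>
      \<bar>K (length_scale zeta * s) / length_scale zeta powr alpha - k0 * s powr alpha\<bar> \<le> e * s powr alpha \<and>
      mu * ((length_scale zeta)\<^sup>2 / zeta * f (length_scale zeta * s)) \<le> e * s powr nu)"
proof -
  have "\<forall>\<^sub>F t in at_right 0. dist (K t / t powr alpha) k0 < e"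
    using K_asym e by (simp add: tendsto_iff)
  then obtain dK where dK: "dK > 0" "\<And>t. 0 < t \<Longrightarrow> t < dK \<Longrightarrow> \<bar>K t / t powr alpha - k0\<bar> < e"
    unfolding eventually_at_right_field dist_real_def by auto
  obtain C where C: "C > 0" "\<forall>\<^sub>F t in at_right 0. norm (f t) \<le> C * norm (t powr nu)"
    using f_bigO by (elim landau_o.bigE)
  then obtain df where df: "df > 0" "\<And>t. 0 < t \<Longrightarrow> t < df \<Longrightarrow> \<bar>f t\<bar> \<le> C * t powr nu"
    unfolding eventually_at_right_field by auto
  have "\<forall>\<^sub>F zeta in at_top. length_scale zeta < min dK df / R"
    using length_scale_tendsto_0 dK df R by (intro order_tendstoD(2)) auto
  moreover have "\<forall>\<^sub>F zeta in at_top. mu * C * (length_scale zeta powr (2 + nu) / zeta) < e"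
    using tendsto_mult_right_zero[OF length_scale_weight_tendsto_0, of "mu * C"] e
    by (intro order_tendstoD(2)) auto
  ultimately show ?thesis
    using eventually_gt_at_top[of 0]
  proof eventually_elim
    case (elim zeta)
    define l where "l = length_scale zeta"
    have l: "l > 0" "l * R < min dK df" "mu * C * (l powr (2 + nu) / zeta) < e"
      using elim length_scale_pos R by (auto simp: l_def field_simps)
    have "\<bar>K (l * s) / l powr alpha - k0 * s powr alpha\<bar> \<le> e * s powr alpha \<and>
        mu * (l\<^sup>2 / zeta * f (l * s)) \<le> e * s powr nu" if s: "0 < s" "s \<le> R" for s
    proof
      have "l * s \<le> l * R" "l * R < dK" "l * R < df"
        using l s by (auto intro: mult_left_mono)
      then have t: "0 < l * s" "l * s < dK" "l * s < df"
        using l s by (linarith | simp)+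
      have "K (l * s) / l powr alpha - k0 * s powr alpha = s powr alpha * (K (l * s) / (l * s) powr alpha - k0)"
        using l s by (simp add: powr_mult field_simps)
      moreover have "s powr alpha * \<bar>K (l * s) / (l * s) powr alpha - k0\<bar> \<le> s powr alpha * e"
        using dK(2)[OF t(1,2)] by (intro mult_left_mono) auto
      ultimately show "\<bar>K (l * s) / l powr alpha - k0 * s powr alpha\<bar> \<le> e * s powr alpha"
        by (simp add: abs_mult mult.commute)
      have "mu * (l\<^sup>2 / zeta * f (l * s)) \<le> mu * (l\<^sup>2 / zeta * (C * (l * s) powr nu))"
        using df(2)[OF t(1,3)] mu elim l by (intro mult_left_mono) auto
      also have "\<dots> = mu * C * (l powr (2 + nu) / zeta) * s powr nu"
        using l s by (simp add: powr_mult powr_add powr_numeral field_simps)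
      also have "\<dots> \<le> e * s powr nu"
        using l s by (intro mult_right_mono) auto
      finally show "mu * (l\<^sup>2 / zeta * f (l * s)) \<le> e * s powr nu" .
    qed
    then show ?case
      using elim by (simp add: l_def)
  qed
qed

lemma profile_sol: "regular_sol N (\<lambda>s x. k0 * s powr alpha * max x 0 powr p) 1 profile"
  using ubar_sol[of 1] by (simp add: profile_def)

lemma rescaled_converges:
  assumes \<sigma>: "\<sigma> > 0" and \<eta>: "\<eta> > 0"
  shows "\<forall>\<^sub>F zeta in at_top. zeta > 0 \<and> (\<forall>\<rho>\<in>{0..\<sigma>}. \<bar>rescaled zeta \<rho> - profile \<rho>\<bar> \<le> \<eta>)
     \<and> (rescaled zeta has_real_derivative deriv (rescaled zeta) \<sigma>) (at \<sigma>)
     \<and> (profile has_real_derivative deriv profile \<sigma>) (at \<sigma>)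
     \<and> \<bar>deriv (rescaled zeta) \<sigma> - deriv profile \<sigma>\<bar> \<le> \<eta>"
proof -
  define \<Gamma> where "\<Gamma> = (\<sigma> powr (alpha + 2) / (alpha + 2) + \<sigma> powr (nu + 2) / (nu + 2)) / (real N - 2)
                 * exp ((k0 + 1) * p / (real N - 2) * \<sigma> powr (alpha + 2) / (alpha + 2))"
  define \<Gamma>' where "\<Gamma>' = ((k0 + 1) * p * \<Gamma> + 1)
                 * (\<sigma> powr (alpha + 1) / (real N + alpha) + \<sigma> powr (nu + 1) / (real N + nu))"
  have \<Gamma>: "\<Gamma> \<ge> 0" and \<Gamma>': "\<Gamma>' \<ge> 0"
    unfolding \<Gamma>'_def \<Gamma>_def using N alpha nu k0 p_gt_1
    by (intro mult_nonneg_nonneg divide_nonneg_nonneg[OF add_nonneg_nonneg] add_nonneg_nonneg; simp)+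
  define e where "e = min 1 (\<eta> / (\<Gamma> + \<Gamma>' + 1))"
  have e: "0 < e" "e \<le> 1" "e * \<Gamma> \<le> \<eta>" "e * \<Gamma>' \<le> \<eta>"
  proof -
    have "\<eta> / (\<Gamma> + \<Gamma>' + 1) * \<Gamma> \<le> \<eta>" "\<eta> / (\<Gamma> + \<Gamma>' + 1) * \<Gamma>' \<le> \<eta>"
      using \<Gamma> \<Gamma>' \<eta> by (simp_all add: field_simps)
    moreover have "e \<le> \<eta> / (\<Gamma> + \<Gamma>' + 1)"
      by (simp add: e_def)
    then have "e * \<Gamma> \<le> \<eta> / (\<Gamma> + \<Gamma>' + 1) * \<Gamma>" "e * \<Gamma>' \<le> \<eta> / (\<Gamma> + \<Gamma>' + 1) * \<Gamma>'"
      using \<Gamma> \<Gamma>' by (metis mult_right_mono)+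
    ultimately show "e * \<Gamma> \<le> \<eta>" "e * \<Gamma>' \<le> \<eta>"
      by linarith+
    show "0 < e" "e \<le> 1"
      using \<Gamma> \<Gamma>' \<eta> by (simp_all add: e_def)
  qed
  have "2 * \<sigma> > 0" using \<sigma> by simp
  from rescaled_coefficients_converge[OF this e(1)] show ?thesis
  proof eventually_elim
    case (elim zeta)
    then have zeta: "zeta > 0" by simp
    define l where "l = length_scale zeta"
    have l: "l > 0" using length_scale_pos[OF zeta] by (simp add: l_def)
    have "continuous_on {0<..} (\<lambda>s. K (l * s))" "continuous_on {0<..} (\<lambda>s. f (l * s))"
      using continuous_on_compose2[OF K_cont, of "{0<..}" "\<lambda>s. l * s"]
        continuous_on_compose2[OF f_cont, of "{0<..}" "\<lambda>s. l * s"] l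
      by (auto simp: continuous_on_mult_left image_subset_iff)
    then have cont: "continuous_on {0<..} (\<lambda>s. K (l * s) / l powr alpha)"
        "continuous_on {0<..} (\<lambda>s. mu * (l\<^sup>2 / zeta * f (l * s)))"
      using l zeta by (auto intro!: continuous_intros)
    have Kr_nonneg: "0 \<le> K (l * s) / l powr alpha" if "0 < s" for s
      using K_pos[of "l * s"] l that by simp
    have fr_nonneg: "0 \<le> mu * (l\<^sup>2 / zeta * f (l * s))" if "0 < s" for s
      using f_nonneg[of "l * s"] mu l zeta that by simp
    have close: "\<And>s. 0 < s \<Longrightarrow> s \<le> 2 * \<sigma> \<Longrightarrow>
        \<bar>K (l * s) / l powr alpha - k0 * s powr alpha\<bar> \<le> e * s powr alpha"
      and small: "\<And>s. 0 < s \<Longrightarrow> s \<le> 2 * \<sigma> \<Longrightarrow> mu * (l\<^sup>2 / zeta * f (l * s)) \<le> e * s powr nu"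
      using elim by (simp_all add: l_def)
    have "1 \<le> p" "\<sigma> < 2 * \<sigma>"
      using p_gt_1 \<sigma> by simp_all
    note est = regular_sol_perturbation[OF N alpha nu k0 this(1) \<sigma> this(2) rescaled_sol[OF zeta] profile_sol,
        folded l_def \<Gamma>_def \<Gamma>'_def,
        OF cont Kr_nonneg fr_nonneg less_imp_le[OF e(1)] e(2) close small]
    have "(\<forall>\<rho>\<in>{0..\<sigma>}. \<bar>rescaled zeta \<rho> - profile \<rho>\<bar> \<le> e * \<Gamma>)
       \<and> (rescaled zeta has_real_derivative deriv (rescaled zeta) \<sigma>) (at \<sigma>)
       \<and> (profile has_real_derivative deriv profile \<sigma>) (at \<sigma>)
       \<and> \<bar>deriv (rescaled zeta) \<sigma> - deriv profile \<sigma>\<bar> \<le> e * \<Gamma>'"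
      using est by blast
    then show ?case
      using zeta e by (auto intro: order_trans)
  qed
qed

lemma profile_pos: "r \<ge> 0 \<Longrightarrow> profile r > 0"
  using model_sol_pos[OF N alpha k0 p_supercritical _ profile_sol] by simp

lemma ubar_eq_profile:
  assumes "zeta > 0" "r \<ge> 0"
  shows "ubar r zeta = zeta * profile (r / length_scale zeta)"
  using model_sol_scaling[OF N alpha less_imp_le[OF k0] _ assms(1) length_scale_pos[OF assms(1)] length_scale_powr
      profile_sol ubar_sol[OF assms(1)] assms(2)] p_gt_1
  by simp

lemma u_eq_rescaled: "zeta > 0 \<Longrightarrow> u r zeta = zeta * rescaled zeta (r / length_scale zeta)"
  using length_scale_pos[of zeta] by (simp add: rescaled_def)

lemma scaled_deriv_diff:
  assumes zeta: "zeta > 0" and \<sigma>: "\<sigma> > 0"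
    and dw: "(rescaled zeta has_real_derivative D) (at \<sigma>)"
    and dU: "(profile has_real_derivative D') (at \<sigma>)"
  shows "zeta powr (-1 - 1 / ((2 + alpha) / (p - 1))) *
      \<bar>deriv (\<lambda>r. u r zeta) (\<sigma> * length_scale zeta) - deriv (\<lambda>r. ubar r zeta) (\<sigma> * length_scale zeta)\<bar> = \<bar>D - D'\<bar>"
proof -
  define l where "l = length_scale zeta"
  have l: "l > 0" using length_scale_pos[OF zeta] by (simp add: l_def)
  have "((\<lambda>r. zeta * rescaled zeta (r / l)) has_real_derivative zeta * D / l) (at (\<sigma> * l))"
    using l dw by (intro has_real_derivative_rescale) auto
  moreover have "(\<lambda>r. zeta * rescaled zeta (r / l)) = (\<lambda>r. u r zeta)"
    using u_eq_rescaled[OF zeta] by (simp add: l_def fun_eq_iff)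
  ultimately have du: "deriv (\<lambda>r. u r zeta) (\<sigma> * l) = zeta * D / l"
    by (simp add: DERIV_imp_deriv)
  have "((\<lambda>r. zeta * profile (r / l)) has_real_derivative zeta * D' / l) (at (\<sigma> * l))"
    using l dU by (intro has_real_derivative_rescale) auto
  then have "((\<lambda>r. ubar r zeta) has_real_derivative zeta * D' / l) (at (\<sigma> * l))"
    by (rule has_field_derivative_transform_within_open[where S = "{0<..}"])
       (use l \<sigma> zeta in \<open>auto simp: ubar_eq_profile l_def\<close>)
  then have dubar: "deriv (\<lambda>r. ubar r zeta) (\<sigma> * l) = zeta * D' / l"
    by (simp add: DERIV_imp_deriv)
  have "zeta powr (-1 - x) = zeta powr (- x) / zeta" for x :: real
  proof -
    have "-1 - x = - x - 1" by simp
    then show ?thesis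
      using zeta by (simp only: powr_diff powr_one_gt_zero_iff powr_one)
  qed
  from this[of "1 / ((2 + alpha) / (p - 1))"]
  have e: "zeta powr (-1 - 1 / ((2 + alpha) / (p - 1))) = l / zeta"
    by (simp add: l_def length_scale_def minus_divide_left)
  have "zeta * D / l - zeta * D' / l = zeta / l * (D - D')"
    using l by (simp add: field_simps)
  then have "l / zeta * \<bar>zeta * D / l - zeta * D' / l\<bar> = \<bar>D - D'\<bar>"
    using l zeta by (simp add: abs_mult)
  then show ?thesis
    unfolding l_def[symmetric] du dubar e .
qed

lemma scaled_value_diff:
  assumes zeta: "zeta > 0" and \<sigma>: "\<sigma> \<ge> 0"
  shows "zeta powr (-1) * \<bar>u (\<sigma> * length_scale zeta) zeta - ubar (\<sigma> * length_scale zeta) zeta\<bar>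
      = \<bar>rescaled zeta \<sigma> - profile \<sigma>\<bar>"
proof -
  have "u (\<sigma> * length_scale zeta) zeta - ubar (\<sigma> * length_scale zeta) zeta = zeta * (rescaled zeta \<sigma> - profile \<sigma>)"
    using zeta \<sigma> length_scale_pos[OF zeta]
    by (simp add: u_eq_rescaled ubar_eq_profile right_diff_distrib)
  then show ?thesis
    using zeta by (simp add: abs_mult powr_minus_divide)
qed

lemma u_nonzero_below_length_scale:
  assumes \<sigma>: "\<sigma> > 0"
  shows "\<exists>zeta_s>0. \<forall>zeta>zeta_s. \<forall>r. 0 < r \<and> r < \<sigma> * length_scale zeta \<longrightarrow> u r zeta \<noteq> 0"
proof -
  have "continuous_on {0..\<sigma>} profile"
    using profile_sol by (auto simp: regular_sol_iff elim: continuous_on_subset)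
  then have "\<exists>x\<in>{0..\<sigma>}. \<forall>y\<in>{0..\<sigma>}. profile x \<le> profile y"
    using \<sigma> by (intro continuous_attains_inf[OF compact_Icc]) auto
  then obtain \<rho>0 where \<rho>0: "\<rho>0 \<in> {0..\<sigma>}" and min: "\<And>\<rho>. \<rho> \<in> {0..\<sigma>} \<Longrightarrow> profile \<rho>0 \<le> profile \<rho>"
    by blast
  define m where "m = profile \<rho>0"
  have m: "m > 0"
    using profile_pos \<rho>0 by (simp add: m_def)
  obtain Z where Z: "\<And>zeta. zeta \<ge> Z \<Longrightarrow> zeta > 0 \<and> (\<forall>\<rho>\<in>{0..\<sigma>}. \<bar>rescaled zeta \<rho> - profile \<rho>\<bar> \<le> m / 2)"
    using rescaled_converges[OF \<sigma>, of "m / 2"] m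
    unfolding eventually_at_top_linorder by auto
  show ?thesis
  proof (intro exI[of _ "max Z 1"] conjI allI impI)
    fix zeta r assume zeta: "max Z 1 < zeta" and r: "0 < r \<and> r < \<sigma> * length_scale zeta"
    have l: "length_scale zeta > 0"
      using length_scale_pos zeta by simp
    then have \<rho>: "r / length_scale zeta \<in> {0..\<sigma>}"
      using r by (simp add: field_simps)
    have "\<bar>rescaled zeta (r / length_scale zeta) - profile (r / length_scale zeta)\<bar> \<le> m / 2"
      using Z[of zeta] zeta \<rho> by auto
    then have "profile (r / length_scale zeta) - rescaled zeta (r / length_scale zeta) \<le> m / 2"
      by (metis abs_le_D2 minus_diff_eq)
    moreover have "m \<le> profile (r / length_scale zeta)"
      using min[OF \<rho>] by (simp add: m_def)
    ultimately have "rescaled zeta (r / length_scale zeta) > 0"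
      using m by linarith
    then show "u r zeta \<noteq> 0"
      using u_eq_rescaled[of zeta r] zeta by simp
  qed simp
qed

lemma value_and_slope_converge:
  assumes \<sigma>: "\<sigma> > 0"
  shows "((\<lambda>zeta. zeta powr (-1) * \<bar>u (\<sigma> * length_scale zeta) zeta - ubar (\<sigma> * length_scale zeta) zeta\<bar>) \<longlongrightarrow> 0) at_top"
    and "((\<lambda>zeta. zeta powr (-1 - 1 / ((2 + alpha) / (p - 1))) *
      \<bar>deriv (\<lambda>r. u r zeta) (\<sigma> * length_scale zeta) - deriv (\<lambda>r. ubar r zeta) (\<sigma> * length_scale zeta)\<bar>) \<longlongrightarrow> 0) at_top"
proof -
  have "\<forall>\<^sub>F zeta in at_top.
      \<bar>zeta powr (-1) * \<bar>u (\<sigma> * length_scale zeta) zeta - ubar (\<sigma> * length_scale zeta) zeta\<bar>\<bar> \<le> \<eta> \<and>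
      \<bar>zeta powr (-1 - 1 / ((2 + alpha) / (p - 1))) *
        \<bar>deriv (\<lambda>r. u r zeta) (\<sigma> * length_scale zeta) - deriv (\<lambda>r. ubar r zeta) (\<sigma> * length_scale zeta)\<bar>\<bar> \<le> \<eta>"
    if "\<eta> > 0" for \<eta>
    using rescaled_converges[OF \<sigma> that]
  proof eventually_elim
    case (elim zeta)
    then show ?case
      using \<sigma> scaled_value_diff[of zeta \<sigma>] scaled_deriv_diff[of zeta \<sigma>] by auto
  qed
  note ev = this
  show "((\<lambda>zeta. zeta powr (-1) * \<bar>u (\<sigma> * length_scale zeta) zeta - ubar (\<sigma> * length_scale zeta) zeta\<bar>) \<longlongrightarrow> 0) at_top"
    and "((\<lambda>zeta. zeta powr (-1 - 1 / ((2 + alpha) / (p - 1))) *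
      \<bar>deriv (\<lambda>r. u r zeta) (\<sigma> * length_scale zeta) - deriv (\<lambda>r. ubar r zeta) (\<sigma> * length_scale zeta)\<bar>) \<longlongrightarrow> 0) at_top"
    by (rule tendsto_0_if_eventually_abs_le, rule eventually_mono[OF ev]; blast)+
qed

end

theorem lemma3p5:
  fixes N :: nat and mu alpha k0 nu p :: real
    and K f :: "real \<Rightarrow> real"
    and u ubar :: "real \<Rightarrow> real \<Rightarrow> real"
  assumes N: "N \<ge> 3"
    and mu: "mu \<ge> 0"
    and K_cont: "continuous_on {0<..} K"
    and K_pos: "\<And>r. r > 0 \<Longrightarrow> K r > 0"
    and alpha: "alpha > -2" and k0: "k0 > 0"
    and K_asym: "((\<lambda>r. K r / r powr alpha) \<longlongrightarrow> k0) (at_right 0)"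
    and f_cont: "continuous_on {0<..} f"
    and f_nonneg: "\<And>r. r > 0 \<Longrightarrow> f r \<ge> 0"
    and f_nonzero: "\<exists>r>0. f r \<noteq> 0"
    and nu: "nu > -2"
    and f_bigO: "f \<in> O[at_right 0](\<lambda>r. r powr nu)"
    and p: "p > (real N + 2 + 2 * alpha) / (real N - 2)"
    and u_sol: "\<And>zeta. zeta > 0 \<Longrightarrow>
       regular_sol N (\<lambda>s v. K s * (max v 0) powr p + mu * f s) zeta (\<lambda>r. u r zeta)"
    and ubar_sol: "\<And>zeta. zeta > 0 \<Longrightarrow>
       regular_sol N (\<lambda>s v. k0 * s powr alpha * (max v 0) powr p) zeta (\<lambda>r. ubar r zeta)"
  shows "(\<forall>sigma>0. \<exists>zeta_s>0. \<forall>zeta>zeta_s.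
            \<forall>r. 0 < r \<and> r < sigma * zeta powr (-1 / ((2 + alpha) / (p - 1))) \<longrightarrow> u r zeta \<noteq> 0)
       \<and> (\<forall>sigma>0.
            ((\<lambda>zeta. zeta powr (-1) *
                 \<bar>u (sigma * zeta powr (-1 / ((2 + alpha) / (p - 1)))) zeta
                  - ubar (sigma * zeta powr (-1 / ((2 + alpha) / (p - 1)))) zeta\<bar>)
               \<longlongrightarrow> 0) at_top
          \<and> ((\<lambda>zeta. zeta powr (-1 - 1 / ((2 + alpha) / (p - 1))) *
                 \<bar>deriv (\<lambda>r. u r zeta) (sigma * zeta powr (-1 / ((2 + alpha) / (p - 1))))
                  - deriv (\<lambda>r. ubar r zeta) (sigma * zeta powr (-1 / ((2 + alpha) / (p - 1))))\<bar>)
               \<longlongrightarrow> 0) at_top)"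
proof -
  \<comment> \<open>The hypothesis f_nonzero is part of the setting but not needed for this lemma.\<close>
  interpret perturbed_lane_emden N mu alpha k0 nu p K f u ubar
    using N mu K_cont K_pos alpha k0 K_asym f_cont f_nonneg nu f_bigO p u_sol ubar_sol
    by unfold_locales
  show ?thesis
    using u_nonzero_below_length_scale value_and_slope_converge unfolding length_scale_def by blast
qed

end
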